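(* Let $(a_n)_{n\ge 1}$ be a sequence of strictly positive real numbers with $\sum_{n\ge1}(1+n^2)^5a_n^2<\infty$. Let $H=\mathbb{R}\times l^2\times l^2$ and let $F:H\to H$ be defined, for $y=(x,(u_n)_{n\ge1},(v_n)_{n\ge1})\in H$, by $$F(y)=\Big(\sum_{n\ge1} n a_n^{1/2}\big(\sin(nx)u_n+\cos(nx)v_n\big),\ \big(a_n^{1/2}\cos(nx)\big)_{n\ge1},\ \big(-a_n^{1/2}\sin(nx)\big)_{n\ge1}\Big).$$ Let $W$ be a cylindrical Wiener process on $H$ and $\sigma$ the projection onto the first coordinate, so that $\sigma W_t=(\beta_t,0,0)$ with $\beta$ a standard one-dimensional Brownian motion. Then for each $y\in H$ there is a unique (analytically) strong solution $$Y\in C([0,\infty);H)\cap L^\infty_{loc}(0,\infty;H)$$ of the equation $dY_t=F(Y_t)\,dt+\sigma\,dW_t$, $Y_0=y$. Moreover, for every $T<\infty$, $$\mathbb{E}\Big(\sup_{t\in[0,T]}\|Y_t\|_H^2\Big)<\infty.$$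
   Context: $H=\mathbb{R}\times l^2\times l^2$ is the Hilbert space with norm $\|y\|_H^2=|x|^2+\|(u_n)_n\|_{l^2}^2+\|(v_n)_n\|_{l^2}^2$ for $y=(x,(u_n)_n,(v_n)_n)$. The equation written in components reads $X_t=x+\int_0^t\sum_n n a_n^{1/2}(\sin(nX_s)u^n_s+\cos(nX_s)v^n_s)ds+\beta_t$, $u^n_t=u^n_0+a_n^{1/2}\int_0^t\cos(nX_s)ds$, $v^n_t=v^n_0-a_n^{1/2}\int_0^t\sin(nX_s)ds$, $n\ge1$. $L^\infty_{loc}(0,\infty;H)$ denotes the functions $(0,\infty)\to H$ which are locally essentially bounded. *)

theory Defs
  imports "HOL-Probability.Probability"
begin

text \<open>Points of H = R x l2 x l2. Sequences (u_n)_{n>=1} are represented by functions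
  nat => real whose value at 0 is forced to be 0 (index 0 is unused).\<close>
type_synonym Hpt = "real \<times> (nat \<Rightarrow> real) \<times> (nat \<Rightarrow> real)"

definition inH :: "Hpt \<Rightarrow> bool" where
  "inH y \<longleftrightarrow> (case y of (x, u, v) \<Rightarrow>
      u 0 = 0 \<and> v 0 = 0 \<and> summable (\<lambda>n. (u n)^2) \<and> summable (\<lambda>n. (v n)^2))"

definition Hnorm :: "Hpt \<Rightarrow> real" where
  "Hnorm y = (case y of (x, u, v) \<Rightarrow> sqrt (x^2 + (\<Sum>n. (u n)^2) + (\<Sum>n. (v n)^2)))"

definition Hdiff :: "Hpt \<Rightarrow> Hpt \<Rightarrow> Hpt" where
  "Hdiff y z = (fst y - fst z, \<lambda>n. fst (snd y) n - fst (snd z) n,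
                \<lambda>n. snd (snd y) n - snd (snd z) n)"

definition Fdrift :: "(nat \<Rightarrow> real) \<Rightarrow> Hpt \<Rightarrow> Hpt" where
  "Fdrift a y = (case y of (x, u, v) \<Rightarrow>
     ((\<Sum>n. real n * sqrt (a n) * (sin (real n * x) * u n + cos (real n * x) * v n)),
      (\<lambda>n. if n = 0 then 0 else sqrt (a n) * cos (real n * x)),
      (\<lambda>n. if n = 0 then 0 else - sqrt (a n) * sin (real n * x))))"

definition std_BM :: "'w measure \<Rightarrow> (real \<Rightarrow> 'w \<Rightarrow> real) \<Rightarrow> bool" where
  "std_BM M B \<longleftrightarrow> prob_space M
     \<and> (\<forall>t\<ge>0. B t \<in> borel_measurable M)
     \<and> (\<forall>\<omega>\<in>space M. B 0 \<omega> = 0 \<and> continuous_on {0..} (\<lambda>t. B t \<omega>))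
     \<and> (\<forall>s t. 0 \<le> s \<and> s < t \<longrightarrow>
          distributed M lborel (\<lambda>\<omega>. B t \<omega> - B s \<omega>)
             (\<lambda>x. ennreal (normal_density 0 (sqrt (t - s)) x)))
     \<and> (\<forall>ts. sorted_wrt (<) ts \<and> (\<forall>t\<in>set ts. 0 \<le> t) \<longrightarrow>
          prob_space.indep_vars M (\<lambda>_. borel)
            (\<lambda>i \<omega>. B (ts ! Suc i) \<omega> - B (ts ! i) \<omega>) {..<length ts - 1})"

definition BM_filt :: "'w measure \<Rightarrow> (real \<Rightarrow> 'w \<Rightarrow> real) \<Rightarrow> real \<Rightarrow> 'w measure" where
  "BM_filt M B t = sigma (space M)
     (\<Union>s\<in>{0..t}. {B s -` A \<inter> space M | A. A \<in> sets borel})"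

definition H_adapted :: "'w measure \<Rightarrow> (real \<Rightarrow> 'w \<Rightarrow> real) \<Rightarrow> (real \<Rightarrow> 'w \<Rightarrow> Hpt) \<Rightarrow> bool" where
  "H_adapted M B Y \<longleftrightarrow> (\<forall>t\<ge>0.
      (\<lambda>\<omega>. fst (Y t \<omega>)) \<in> borel_measurable (BM_filt M B t)
    \<and> (\<forall>n. (\<lambda>\<omega>. fst (snd (Y t \<omega>)) n) \<in> borel_measurable (BM_filt M B t))
    \<and> (\<forall>n. (\<lambda>\<omega>. snd (snd (Y t \<omega>)) n) \<in> borel_measurable (BM_filt M B t)))"

text \<open>Pathwise: the path Y (for driving path b) lies in C([0,oo);H) \<inter> L^oo_loc and solves
  Y_t = y + int_0^t F(Y_s) ds + (b_t,0,0), componentwise.\<close>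
definition is_solution :: "(nat \<Rightarrow> real) \<Rightarrow> (real \<Rightarrow> real) \<Rightarrow> Hpt \<Rightarrow> (real \<Rightarrow> Hpt) \<Rightarrow> bool" where
  "is_solution a b y Y \<longleftrightarrow>
      (\<forall>t\<ge>0. inH (Y t))
    \<and> (\<forall>t\<ge>0. \<forall>\<epsilon>>0. \<exists>\<delta>>0. \<forall>s\<ge>0. \<bar>s - t\<bar> < \<delta> \<longrightarrow> Hnorm (Hdiff (Y s) (Y t)) < \<epsilon>)
    \<and> (\<forall>T. \<exists>C. \<forall>t\<in>{0..T}. Hnorm (Y t) \<le> C)
    \<and> (\<forall>t\<ge>0. ((\<lambda>s. fst (Fdrift a (Y s))) has_integral (fst (Y t) - fst y - b t)) {0..t})
    \<and> (\<forall>t\<ge>0. \<forall>n. ((\<lambda>s. fst (snd (Fdrift a (Y s))) n)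
                     has_integral (fst (snd (Y t)) n - fst (snd y) n)) {0..t})
    \<and> (\<forall>t\<ge>0. \<forall>n. ((\<lambda>s. snd (snd (Fdrift a (Y s))) n)
                     has_integral (snd (snd (Y t)) n - snd (snd y) n)) {0..t})"

end

(*
  Substituting the explicit solutions u_n(t) = u_n(0) + a_n^(1/2) int_0^t cos (n X_r) dr and
  v_n(t) = v_n(0) - a_n^(1/2) int_0^t sin (n X_r) dr into the first equation turns the system into a
  closed, path-dependent equation for the first coordinate alone,
    X_t = x + beta_t + int_0^t (phi (X_s) + int_0^s psi (X_s - X_r) dr) ds,
  with phi and psi bounded and Lipschitz because sum_n n^4 a_n < oo, which follows from the
  hypothesis on (a_n). This equation is solved path by path by Picard iteration: consecutive
  iterates differ by O((L t)^k / k!), which gives existence and, by the same estimate, uniqueness.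
  The iterates are adapted to the Brownian filtration because integrals of continuous paths are limits
  of Riemann sums. Finally ||Y_t||^2 <= C_T + 2 beta_t^2 on [0, T], and E sup_(t <= T) beta_t^2 < oo by
  Kolmogorov's dyadic chaining, using the fourth moments of the Gaussian increments.
*)
theory Submission
  imports Defs
begin

lemma abs_sin_diff_le: "\<bar>sin x - sin y\<bar> \<le> \<bar>x - y\<bar>" for x y :: real
proof -
  have "\<bar>sin x - sin y\<bar> = 2 * \<bar>sin ((x - y) / 2)\<bar> * \<bar>cos ((x + y) / 2)\<bar>"
    by (simp add: sin_diff_sin abs_mult)
  also have "\<dots> \<le> 2 * \<bar>(x - y) / 2\<bar> * 1"
    by (intro mult_mono abs_sin_x_le_abs_x) auto
  finally show ?thesis by simp
qed

lemma abs_cos_diff_le: "\<bar>cos x - cos y\<bar> \<le> \<bar>x - y\<bar>" for x y :: real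
  using abs_sin_diff_le[of "x + pi/2" "y + pi/2"] by (simp add: sin_add)

lemma abs_sin_mult_diff_le: "\<bar>sin (c * x) - sin (c * y)\<bar> \<le> \<bar>c\<bar> * \<bar>x - y\<bar>" for c x y :: real
  using abs_sin_diff_le[of "c * x" "c * y"] by (simp add: right_diff_distrib[symmetric] abs_mult)

lemma abs_cos_mult_diff_le: "\<bar>cos (c * x) - cos (c * y)\<bar> \<le> \<bar>c\<bar> * \<bar>x - y\<bar>" for c x y :: real
  using abs_cos_diff_le[of "c * x" "c * y"] by (simp add: right_diff_distrib[symmetric] abs_mult)

lemma bounded_lipschitz_suminf:
  fixes f :: "nat \<Rightarrow> real \<Rightarrow> real"
  assumes c: "summable c" and bound: "\<And>n z. \<bar>f n z\<bar> \<le> c n"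
    and lip: "\<And>n z w. \<bar>f n z - f n w\<bar> \<le> c n * \<bar>z - w\<bar>"
  shows "summable (\<lambda>n. f n z)" and "\<bar>\<Sum>n. f n z\<bar> \<le> suminf c"
    and "\<bar>(\<Sum>n. f n z) - (\<Sum>n. f n w)\<bar> \<le> suminf c * \<bar>z - w\<bar>"
proof -
  have abs_summable: "summable (\<lambda>n. \<bar>f n z\<bar>)" for z
    by (rule summable_comparison_test[OF _ c]) (use bound in auto)
  then show summable: "summable (\<lambda>n. f n z)" for z
    by (rule summable_rabs_cancel)
  show "\<bar>\<Sum>n. f n z\<bar> \<le> suminf c"
    using summable_rabs[OF abs_summable[of z]] suminf_le[OF bound abs_summable[of z] c] by linarith
  have diff_summable: "summable (\<lambda>n. \<bar>f n z - f n w\<bar>)"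
    by (rule summable_comparison_test[OF _ summable_mult2[OF c, of "\<bar>z - w\<bar>"]]) (use lip in auto)
  have "\<bar>(\<Sum>n. f n z) - (\<Sum>n. f n w)\<bar> = \<bar>\<Sum>n. f n z - f n w\<bar>"
    using suminf_diff[OF summable summable] by simp
  also have "\<dots> \<le> (\<Sum>n. c n * \<bar>z - w\<bar>)"
    using summable_rabs[OF diff_summable] suminf_le[OF lip diff_summable summable_mult2[OF c]]
    by linarith
  also have "\<dots> = suminf c * \<bar>z - w\<bar>"
    by (rule suminf_mult2[OF c, symmetric])
  finally show "\<bar>(\<Sum>n. f n z) - (\<Sum>n. f n w)\<bar> \<le> suminf c * \<bar>z - w\<bar>" .
qed

lemma continuous_on_if_lipschitz:
  fixes f :: "real \<Rightarrow> real"
  assumes "\<And>z w. \<bar>f z - f w\<bar> \<le> L * \<bar>z - w\<bar>" and "L \<ge> 0"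
  shows "continuous_on S f"
  by (rule lipschitz_on_continuous_on[of L], rule lipschitz_onI) (use assms in \<open>auto simp: dist_real_def\<close>)

lemma continuous_on_dominated_increments:
  fixes h X :: "real \<Rightarrow> real"
  assumes X: "continuous_on S X" and C: "C \<ge> 0" and D: "D \<ge> 0"
    and incr: "\<And>s s'. s \<in> S \<Longrightarrow> s' \<in> S \<Longrightarrow> \<bar>h s' - h s\<bar> \<le> C * \<bar>X s' - X s\<bar> + D * \<bar>s' - s\<bar>"
  shows "continuous_on S h"
  unfolding continuous_on_iff
proof (intro ballI allI impI)
  fix s and e :: real assume s: "s \<in> S" and e: "e > 0"
  have "e / (2 * (C + 1)) > 0" using e C by simp
  then obtain d where d: "d > 0" "\<And>s'. s' \<in> S \<Longrightarrow> dist s' s < d \<Longrightarrow> dist (X s') (X s) < e / (2 * (C + 1))"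
    using X s unfolding continuous_on_iff by blast
  show "\<exists>d>0. \<forall>s'\<in>S. dist s' s < d \<longrightarrow> dist (h s') (h s) < e"
  proof (intro exI[of _ "min d (e / (2 * (D + 1)))"] conjI ballI impI)
    show "min d (e / (2 * (D + 1))) > 0" using d e D by simp
    fix s' assume s': "s' \<in> S" and close: "dist s' s < min d (e / (2 * (D + 1)))"
    have "\<bar>X s' - X s\<bar> < e / (2 * (C + 1))" using d(2)[OF s'] close by (simp add: dist_real_def)
    then have "C * \<bar>X s' - X s\<bar> \<le> C * (e / (2 * (C + 1)))" using C by (intro mult_left_mono) auto
    also have "\<dots> \<le> e / 2" using C e by (simp add: field_simps)
    finally have 1: "C * \<bar>X s' - X s\<bar> \<le> e / 2" .
    have "\<bar>s' - s\<bar> < e / (2 * (D + 1))" using close by (simp add: dist_real_def)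
    then have "D * \<bar>s' - s\<bar> \<le> D * (e / (2 * (D + 1)))" using D by (intro mult_left_mono) auto
    also have "\<dots> < e / 2" using D e by (simp add: field_simps)
    finally show "dist (h s') (h s) < e" using incr[OF s s'] 1 by (simp add: dist_real_def)
  qed
qed

lemma has_integral_power_over_fact:
  fixes K m t :: real
  assumes "t \<ge> 0"
  shows "((\<lambda>s. K * m * (K * s) ^ k / fact k) has_integral m * (K * t) ^ Suc k / fact (Suc k)) {0..t}"
proof -
  define C where "C = m * K ^ Suc k / fact (Suc k)"
  have "((\<lambda>s. K * m * (K * s) ^ k / fact k) has_integral C * t ^ Suc k - C * 0 ^ Suc k) {0..t}"
  proof (rule fundamental_theorem_of_calculus[OF assms])
    fix s :: real
    have "((\<lambda>s. C * s ^ Suc k) has_real_derivative C * (real (Suc k) * s ^ k)) (at s within {0..t})"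
      using DERIV_cmult[OF DERIV_pow[of "Suc k" s]] by simp
    moreover have "C * (real (Suc k) * s ^ k) = K * m * (K * s) ^ k / fact k"
      unfolding C_def by (simp add: fact_Suc power_mult_distrib field_simps del: of_nat_Suc)
    ultimately show "((\<lambda>s. C * s ^ Suc k) has_vector_derivative K * m * (K * s) ^ k / fact k)
        (at s within {0..t})"
      by (simp add: has_real_derivative_iff_has_vector_derivative)
  qed
  moreover have "C * t ^ Suc k - C * 0 ^ Suc k = m * (K * t) ^ Suc k / fact (Suc k)"
    unfolding C_def by (simp add: power_mult_distrib)
  ultimately show ?thesis by simp
qed

lemma le_zero_if_le_power_over_fact:
  fixes x m c :: real
  assumes "\<And>k. x \<le> m * c ^ k / fact k"
  shows "x \<le> 0"
proof -
  have "(\<lambda>k. m * (c ^ k / fact k)) \<longlonglongrightarrow> m * 0"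
    using summable_LIMSEQ_zero[OF summable_exp[of c]]
    by (intro tendsto_mult tendsto_const) (simp add: divide_inverse mult.commute)
  then show ?thesis using assms by (intro LIMSEQ_le_const) auto
qed

lemma abs_integral_diff_le:
  fixes f :: "real \<Rightarrow> real"
  assumes f: "continuous_on {0..max s t} f" and bound: "\<And>x. \<bar>f x\<bar> \<le> L"
    and "s \<ge> 0" "t \<ge> 0"
  shows "\<bar>integral {0..t} f - integral {0..s} f\<bar> \<le> L * \<bar>t - s\<bar>"
proof -
  have ordered: "\<bar>integral {0..q} f - integral {0..p} f\<bar> \<le> L * (q - p)"
    if "0 \<le> p" "p \<le> q" "continuous_on {0..q} f" for p q
  proof -
    have "integral {0..p} f + integral {p..q} f = integral {0..q} f"
      by (rule Henstock_Kurzweil_Integration.integral_combine)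
        (use that in \<open>auto intro: integrable_continuous_real\<close>)
    moreover have "norm (integral {p..q} f) \<le> L * (q - p)"
      by (rule integral_bound) (use that bound in \<open>auto intro: continuous_on_subset\<close>)
    ultimately show ?thesis by simp
  qed
  show ?thesis
    using ordered[of s t] ordered[of t s] f assms(3,4)
    by (cases "s \<le> t") (simp_all add: max_def abs_minus_commute)
qed

lemma integral_equal_partition:
  fixes f :: "real \<Rightarrow> real"
  assumes "h \<ge> 0" and "continuous_on {0..real n * h} f"
  shows "integral {0..real n * h} f = (\<Sum>i<n. integral {real i * h..real (Suc i) * h} f)"
  using assms(2)
proof (induction n)
  case (Suc n)
  have le: "real n * h \<le> real (Suc n) * h" using assms(1) by (simp add: distrib_right)
  have "continuous_on {0..real n * h} f"
    by (rule continuous_on_subset[OF Suc.prems]) (use le in auto)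
  moreover have "integral {0..real n * h} f + integral {real n * h..real (Suc n) * h} f
      = integral {0..real (Suc n) * h} f"
    by (rule Henstock_Kurzweil_Integration.integral_combine)
       (use assms(1) le Suc.prems in \<open>auto intro: integrable_continuous_real\<close>)
  ultimately show ?case using Suc.IH by simp
qed simp

lemma sqrt_square_add_le: "sqrt (x^2 + y) \<le> \<bar>x\<bar> + sqrt y" if "y \<ge> 0" for x y :: real
proof -
  have "x^2 + y \<le> (\<bar>x\<bar> + sqrt y)^2" using that by (simp add: power2_eq_square algebra_simps)
  then have "sqrt (x^2 + y) \<le> sqrt ((\<bar>x\<bar> + sqrt y)^2)" by (rule real_sqrt_le_mono)
  then show ?thesis using that by simp
qed

lemma summable_square_diff:
  fixes u v :: "nat \<Rightarrow> real"
  assumes "summable (\<lambda>n. (u n)^2)" and "summable (\<lambda>n. (v n)^2)"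
  shows "summable (\<lambda>n. (u n - v n)^2)"
proof -
  have "(u n - v n)^2 \<le> 2 * (u n)^2 + 2 * (v n)^2" for n
    using zero_le_power2[of "u n + v n"] by (simp add: power2_eq_square algebra_simps)
  then show ?thesis
    by (intro summable_comparison_test[OF _ summable_add[OF summable_mult[OF assms(1)] summable_mult[OF assms(2)]]])
      auto
qed

lemma abs_fst_diff_le_Hnorm:
  assumes "inH p" "inH q"
  shows "\<bar>fst p - fst q\<bar> \<le> Hnorm (Hdiff p q)"
proof -
  obtain x u v x' u' v' where pq: "p = (x, u, v)" "q = (x', u', v')" by (cases p, cases q) auto
  have "summable (\<lambda>n. (u n - u' n)^2)" "summable (\<lambda>n. (v n - v' n)^2)"
    using assms unfolding pq inH_def by (auto intro: summable_square_diff)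
  then have "0 \<le> (\<Sum>n. (u n - u' n)^2)" "0 \<le> (\<Sum>n. (v n - v' n)^2)"
    by (simp_all add: suminf_nonneg)
  then have "sqrt ((x - x')^2) \<le> sqrt ((x - x')^2 + (\<Sum>n. (u n - u' n)^2) + (\<Sum>n. (v n - v' n)^2))"
    by (intro real_sqrt_le_mono) simp
  then show ?thesis unfolding pq Hnorm_def Hdiff_def by simp
qed

lemma Fdrift_components:
  "fst (snd (Fdrift a p)) n = (if n = 0 then 0 else sqrt (a n) * cos (real n * fst p))"
  "snd (snd (Fdrift a p)) n = (if n = 0 then 0 else - sqrt (a n) * sin (real n * fst p))"
  by (cases p; simp add: Fdrift_def)+

lemma abs_integral_minus_rectangle_le:
  fixes f :: "real \<Rightarrow> real"
  assumes "p \<le> q" and f: "continuous_on {p..q} f" and close: "\<And>x. x \<in> {p..q} \<Longrightarrow> \<bar>f x - f p\<bar> \<le> e"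
  shows "\<bar>integral {p..q} f - (q - p) * f p\<bar> \<le> e * (q - p)"
proof -
  have "integral {p..q} f - (q - p) * f p = integral {p..q} (\<lambda>x. f x - f p)"
    using \<open>p \<le> q\<close> by (simp add: integral_diff integrable_continuous_real f algebra_simps)
  moreover have "norm (integral {p..q} (\<lambda>x. f x - f p)) \<le> e * (q - p)"
    using assms by (intro integral_bound) (auto intro!: continuous_intros)
  ultimately show ?thesis by simp
qed

lemma abs_riemann_sum_minus_integral_le:
  fixes f :: "real \<Rightarrow> real"
  assumes h: "h \<ge> 0" and f: "continuous_on {0..real n * h} f"
    and osc: "\<And>x y. x \<in> {0..real n * h} \<Longrightarrow> y \<in> {0..real n * h} \<Longrightarrow> \<bar>x - y\<bar> \<le> h \<Longrightarrow> \<bar>f x - f y\<bar> \<le> e"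
  shows "\<bar>(\<Sum>i<n. h * f (real i * h)) - integral {0..real n * h} f\<bar> \<le> e * (real n * h)"
proof -
  have piece: "\<bar>integral {real i * h..real (Suc i) * h} f - h * f (real i * h)\<bar> \<le> e * h" if "i < n" for i
  proof -
    have "real (Suc i) * h \<le> real n * h" using that h by (intro mult_right_mono) auto
    moreover have "0 \<le> real i * h" using h by simp
    ultimately have sub: "{real i * h..real (Suc i) * h} \<subseteq> {0..real n * h}" by auto
    have "\<bar>integral {real i * h..real (Suc i) * h} f - (real (Suc i) * h - real i * h) * f (real i * h)\<bar>
        \<le> e * (real (Suc i) * h - real i * h)"
    proof (rule abs_integral_minus_rectangle_le)
      show "real i * h \<le> real (Suc i) * h" using h by (simp add: distrib_right)
      show "continuous_on {real i * h..real (Suc i) * h} f" by (rule continuous_on_subset[OF f sub])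
      fix x assume x: "x \<in> {real i * h..real (Suc i) * h}"
      have "real i * h \<le> real (Suc i) * h" using h by (simp add: distrib_right)
      then have "x \<in> {0..real n * h}" "real i * h \<in> {0..real n * h}" using x sub by auto
      moreover have "\<bar>x - real i * h\<bar> \<le> h" using x by (simp add: algebra_simps)
      ultimately show "\<bar>f x - f (real i * h)\<bar> \<le> e" by (rule osc)
    qed
    then show ?thesis by (simp add: algebra_simps)
  qed
  have "integral {0..real n * h} f = (\<Sum>i<n. integral {real i * h..real (Suc i) * h} f)"
    by (rule integral_equal_partition[OF h f])
  then have "\<bar>(\<Sum>i<n. h * f (real i * h)) - integral {0..real n * h} f\<bar>
      = \<bar>\<Sum>i<n. integral {real i * h..real (Suc i) * h} f - h * f (real i * h)\<bar>"
    by (simp add: sum_subtractf abs_minus_commute)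
  also have "\<dots> \<le> (\<Sum>i<n. \<bar>integral {real i * h..real (Suc i) * h} f - h * f (real i * h)\<bar>)"
    by (rule sum_abs)
  also have "\<dots> \<le> (\<Sum>i<n. e * h)" by (rule sum_mono) (use piece in auto)
  finally show ?thesis by (simp add: mult_ac)
qed

lemma riemann_sum_tendsto_integral:
  fixes f :: "real \<Rightarrow> real"
  assumes s: "s \<ge> 0" and f: "continuous_on {0..s} f"
  shows "(\<lambda>m. \<Sum>i<Suc m. s / real (Suc m) * f (real i * (s / real (Suc m)))) \<longlonglongrightarrow> integral {0..s} f"
proof (rule LIMSEQ_I)
  fix r :: real assume r: "r > 0"
  define e where "e = r / (2 * (s + 1))"
  have e: "e > 0" unfolding e_def using r s by simp
  obtain d where "d > 0" and d: "\<And>x x'. x \<in> {0..s} \<Longrightarrow> x' \<in> {0..s} \<Longrightarrow> dist x' x < d \<Longrightarrow> dist (f x') (f x) < e"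
    using compact_uniformly_continuous[OF f compact_Icc] e unfolding uniformly_continuous_on_def by metis
  obtain N :: nat where N: "s / d < real N" using reals_Archimedean2 by blast
  show "\<exists>N. \<forall>m\<ge>N. norm ((\<Sum>i<Suc m. s / real (Suc m) * f (real i * (s / real (Suc m)))) - integral {0..s} f) < r"
  proof (intro exI allI impI)
    fix m assume "m \<ge> N"
    define h where "h = s / real (Suc m)"
    have h: "h \<ge> 0" "real (Suc m) * h = s" unfolding h_def using s by simp_all
    have "d * real N \<le> d * real (Suc m)" using \<open>m \<ge> N\<close> \<open>d > 0\<close> by simp
    then have "s < d * real (Suc m)" using N \<open>d > 0\<close> by (simp add: field_simps)
    then have "h < d" unfolding h_def by (simp add: field_simps mult.commute)
    have "\<bar>(\<Sum>i<Suc m. h * f (real i * h)) - integral {0..s} f\<bar> \<le> e * s"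
    proof (rule abs_riemann_sum_minus_integral_le[OF h(1), of "Suc m", unfolded h(2)])
      fix x y assume "x \<in> {0..s}" "y \<in> {0..s}" "\<bar>x - y\<bar> \<le> h"
      then show "\<bar>f x - f y\<bar> \<le> e" using d[of y x] \<open>h < d\<close> by (simp add: dist_real_def)
    qed (rule f)
    also have "\<dots> < r" unfolding e_def using r s by (simp add: field_simps add_nonneg_pos)
    finally show "norm ((\<Sum>i<Suc m. s / real (Suc m) * f (real i * (s / real (Suc m)))) - integral {0..s} f) < r"
      unfolding h_def[symmetric] by simp
  qed
qed

lemma borel_measurable_integral_continuous_path:
  fixes h :: "real \<Rightarrow> 'w \<Rightarrow> real"
  assumes s: "s \<ge> 0" and h: "\<And>r. r \<in> {0..s} \<Longrightarrow> h r \<in> borel_measurable N"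
    and cont: "\<And>\<omega>. \<omega> \<in> space N \<Longrightarrow> continuous_on {0..s} (\<lambda>r. h r \<omega>)"
  shows "(\<lambda>\<omega>. integral {0..s} (\<lambda>r. h r \<omega>)) \<in> borel_measurable N"
proof (rule borel_measurable_LIMSEQ_real)
  fix \<omega> assume "\<omega> \<in> space N"
  then show "(\<lambda>m. \<Sum>i<Suc m. s / real (Suc m) * h (real i * (s / real (Suc m))) \<omega>)
      \<longlonglongrightarrow> integral {0..s} (\<lambda>r. h r \<omega>)"
    by (rule riemann_sum_tendsto_integral[OF s cont])
next
  fix m :: nat
  have "real i * (s / real (Suc m)) \<in> {0..s}" if "i < Suc m" for i
    using that s mult_right_mono[of "real i" "real (Suc m)" "s / real (Suc m)"] by simp
  then show "(\<lambda>\<omega>. \<Sum>i<Suc m. s / real (Suc m) * h (real i * (s / real (Suc m))) \<omega>) \<in> borel_measurable N"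
    by (intro borel_measurable_sum borel_measurable_times borel_measurable_const h) simp
qed

section \<open>Brownian motion\<close>

lemma std_BM_D:
  assumes "std_BM M B"
  shows "prob_space M" "\<And>t. t \<ge> 0 \<Longrightarrow> B t \<in> borel_measurable M"
    "\<And>\<omega>. \<omega> \<in> space M \<Longrightarrow> B 0 \<omega> = 0" "\<And>\<omega>. \<omega> \<in> space M \<Longrightarrow> continuous_on {0..} (\<lambda>t. B t \<omega>)"
  using assms unfolding std_BM_def by blast+

lemma space_BM_filt: "space (BM_filt M B t) = space M"
  unfolding BM_filt_def by (simp add: space_measure_of_conv)

lemma measurable_BM_filt:
  assumes "s \<in> {0..t}"
  shows "B s \<in> borel_measurable (BM_filt M B t)"
proof (rule measurableI)
  fix A :: "real set" assume "A \<in> sets borel"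
  then have "B s -` A \<inter> space M \<in> sigma_sets (space M) (\<Union>s\<in>{0..t}. {B s -` A \<inter> space M | A. A \<in> sets borel})"
    using assms by (intro sigma_sets.Basic) blast
  then show "B s -` A \<inter> space (BM_filt M B t) \<in> sets (BM_filt M B t)"
    unfolding BM_filt_def by (subst sets_measure_of) (auto simp: space_measure_of_conv)
qed simp

lemma BM_increment_fourth_moment:
  assumes BM: "std_BM M B" and "0 \<le> s" "s < t"
  shows "(\<integral>\<^sup>+ \<omega>. ennreal ((B t \<omega> - B s \<omega>)^4) \<partial>M) = ennreal (3 * (t - s)^2)"
proof -
  define \<sigma> where "\<sigma> = sqrt (t - s)"
  have \<sigma>: "\<sigma> > 0" "\<sigma>^2 = t - s" unfolding \<sigma>_def using assms by simp_all
  have "distributed M lborel (\<lambda>\<omega>. B t \<omega> - B s \<omega>) (\<lambda>x. ennreal (normal_density 0 \<sigma> x))"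
    using assms unfolding std_BM_def \<sigma>_def by blast
  then have "(\<integral>\<^sup>+ \<omega>. ennreal ((B t \<omega> - B s \<omega>)^4) \<partial>M)
      = (\<integral>\<^sup>+ x. ennreal (normal_density 0 \<sigma> x * x^4) \<partial>lborel)"
    by (subst distributed_nn_integral[symmetric]) (auto simp: ennreal_mult intro!: nn_integral_cong)
  also have "\<dots> = ennreal (fact 4 / ((2 / \<sigma>\<^sup>2) ^ 2 * fact 2))"
  proof -
    have moment: "has_bochner_integral lborel (\<lambda>x. normal_density 0 \<sigma> x * x^4)
        (fact 4 / ((2 / \<sigma>\<^sup>2) ^ 2 * fact 2))"
      using normal_moment_even[OF \<sigma>(1), of 0 2] by simp
    then have "(\<integral>\<^sup>+ x. ennreal (normal_density 0 \<sigma> x * x^4) \<partial>lborel)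
        = ennreal (integral\<^sup>L lborel (\<lambda>x. normal_density 0 \<sigma> x * x^4))"
      using nn_integral_eq_integral[of lborel "\<lambda>x. normal_density 0 \<sigma> x * x^4"]
      by (simp add: has_bochner_integral_iff)
    then show ?thesis using has_bochner_integral_integral_eq[OF moment] by simp
  qed
  also have "(fact 4 / ((2 / \<sigma>\<^sup>2) ^ 2 * fact 2) :: real) = 3 * (t - s)^2"
    unfolding \<sigma>(2) using assms by (simp add: fact_numeral field_simps power2_eq_square)
  finally show ?thesis .
qed

definition dyadic :: "real \<Rightarrow> nat \<Rightarrow> nat \<Rightarrow> real" where
  "dyadic T k j = T * real j / 2 ^ k"

definition dyadic_incr :: "(real \<Rightarrow> 'w \<Rightarrow> real) \<Rightarrow> real \<Rightarrow> nat \<Rightarrow> nat \<Rightarrow> 'w \<Rightarrow> real" where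
  "dyadic_incr B T k j \<omega> = B (dyadic T k (Suc j)) \<omega> - B (dyadic T k j) \<omega>"

text \<open>\<open>dyadic_l4 B T k\<close> dominates every increment along the \<open>k\<close>-th dyadic partition of \<open>[0, T]\<close>,
  while \<open>E (dyadic_l4 B T k)\<^sup>2 = O ((3/4)\<^sup>k)\<close> by the Gaussian fourth moments; this drives
  Kolmogorov's chaining argument.\<close>

definition dyadic_l4 :: "(real \<Rightarrow> 'w \<Rightarrow> real) \<Rightarrow> real \<Rightarrow> nat \<Rightarrow> 'w \<Rightarrow> real" where
  "dyadic_l4 B T k \<omega> = sqrt (sqrt (\<Sum>j<2^k. (dyadic_incr B T k j \<omega>)^4))"

lemma dyadic_l4_nonneg: "dyadic_l4 B T k \<omega> \<ge> 0"
  unfolding dyadic_l4_def by (intro real_sqrt_ge_zero sum_nonneg) simp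

lemma abs_dyadic_incr_le_dyadic_l4:
  assumes "j < 2^k"
  shows "\<bar>dyadic_incr B T k j \<omega>\<bar> \<le> dyadic_l4 B T k \<omega>"
proof -
  have "(dyadic_incr B T k j \<omega>)^4 \<le> (\<Sum>j<2^k. (dyadic_incr B T k j \<omega>)^4)"
    by (rule member_le_sum) (use assms in auto)
  then have "sqrt (sqrt (((dyadic_incr B T k j \<omega>)^2)^2)) \<le> dyadic_l4 B T k \<omega>"
    unfolding dyadic_l4_def by (simp flip: power_mult)
  then show ?thesis by (simp only: real_sqrt_abs) simp
qed

lemma dyadic_double: "dyadic T (Suc m) (2 * i) = dyadic T m i"
  unfolding dyadic_def by simp

lemma abs_at_dyadic_le_sum_dyadic_l4:
  assumes B0: "B 0 \<omega> = 0"
  shows "j \<le> 2^m \<Longrightarrow> \<bar>B (dyadic T m j) \<omega>\<bar> \<le> (\<Sum>k\<le>m. dyadic_l4 B T k \<omega>)"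
proof (induction m arbitrary: j)
  case 0
  then consider "j = 0" | "j = 1" by fastforce
  then show ?case
  proof cases
    case 2
    then show ?thesis
      using abs_dyadic_incr_le_dyadic_l4[of 0 0 B T \<omega>] B0 by (simp add: dyadic_incr_def dyadic_def)
  qed (simp add: B0 dyadic_def dyadic_l4_nonneg)
next
  case (Suc m)
  have mono: "(\<Sum>k\<le>m. dyadic_l4 B T k \<omega>) \<le> (\<Sum>k\<le>Suc m. dyadic_l4 B T k \<omega>)"
    using dyadic_l4_nonneg[of B T "Suc m" \<omega>] by simp
  obtain i where "j = 2 * i \<or> j = 2 * i + 1" by (metis oddE evenE)
  then show ?case
  proof
    assume j: "j = 2 * i"
    then have "\<bar>B (dyadic T m i) \<omega>\<bar> \<le> (\<Sum>k\<le>m. dyadic_l4 B T k \<omega>)"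
      using Suc.prems by (intro Suc.IH) simp
    then show ?thesis using j mono by (simp add: dyadic_double)
  next
    assume j: "j = 2 * i + 1"
    then have "i < 2^m" using Suc.prems by simp
    then have "\<bar>B (dyadic T m i) \<omega>\<bar> \<le> (\<Sum>k\<le>m. dyadic_l4 B T k \<omega>)"
      "\<bar>dyadic_incr B T (Suc m) (2 * i) \<omega>\<bar> \<le> dyadic_l4 B T (Suc m) \<omega>"
      by (simp_all add: Suc.IH abs_dyadic_incr_le_dyadic_l4)
    moreover have "B (dyadic T (Suc m) j) \<omega> = B (dyadic T m i) \<omega> + dyadic_incr B T (Suc m) (2 * i) \<omega>"
      unfolding dyadic_incr_def using j by (simp add: dyadic_double)
    ultimately show ?thesis by simp
  qed
qed

lemma dyadic_approximation:
  assumes T: "T > 0" and t: "t \<in> {0..T}"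
  obtains j where "\<And>m. j m \<le> 2^m" and "(\<lambda>m. dyadic T m (j m)) \<longlonglongrightarrow> t"
proof
  define y where "y m = t * 2 ^ m / T" for m :: nat
  have y: "0 \<le> y m" "y m \<le> 2^m" for m unfolding y_def using t T by (simp_all add: field_simps)
  show "nat \<lfloor>y m\<rfloor> \<le> 2^m" for m
    using floor_mono[OF y(2)[of m]] by (simp add: nat_le_iff)
  have bounds: "t - T * (1/2)^m \<le> dyadic T m (nat \<lfloor>y m\<rfloor>)" "dyadic T m (nat \<lfloor>y m\<rfloor>) \<le> t" for m
  proof -
    have j: "y m - 1 \<le> real (nat \<lfloor>y m\<rfloor>)" "real (nat \<lfloor>y m\<rfloor>) \<le> y m"
      using y(1)[of m] of_int_floor_le[of "y m"] real_of_int_floor_add_one_gt[of "y m"] by simp_all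
    have "T * (y m - 1) / 2^m \<le> dyadic T m (nat \<lfloor>y m\<rfloor>)" "dyadic T m (nat \<lfloor>y m\<rfloor>) \<le> T * y m / 2^m"
      unfolding dyadic_def using T j by (simp_all add: divide_right_mono)
    moreover have "T * y m / 2^m = t" "T * (y m - 1) / 2^m = t - T * (1/2)^m"
      unfolding y_def using T by (simp_all add: field_simps power_one_over)
    ultimately show "t - T * (1/2)^m \<le> dyadic T m (nat \<lfloor>y m\<rfloor>)" "dyadic T m (nat \<lfloor>y m\<rfloor>) \<le> t"
      by simp_all
  qed
  have "(\<lambda>m. t - T * (1/2)^m) \<longlonglongrightarrow> t - T * 0"
    by (intro tendsto_diff tendsto_const tendsto_mult LIMSEQ_power_zero) simp
  then have low: "(\<lambda>m. t - T * (1/2)^m) \<longlonglongrightarrow> t" by simp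
  show "(\<lambda>m. dyadic T m (nat \<lfloor>y m\<rfloor>)) \<longlonglongrightarrow> t"
    by (rule tendsto_sandwich[OF always_eventually always_eventually low tendsto_const])
      (use bounds in blast)+
qed

lemma abs_le_if_dyadic_sums_le:
  assumes B0: "B 0 \<omega> = 0" and B: "continuous_on {0..} (\<lambda>s. B s \<omega>)" and T: "T > 0"
    and t: "t \<in> {0..T}" and R: "\<And>m. (\<Sum>k\<le>m. dyadic_l4 B T k \<omega>) \<le> R"
  shows "\<bar>B t \<omega>\<bar> \<le> R"
proof -
  obtain j where j: "\<And>m. j m \<le> 2^m" and lim: "(\<lambda>m. dyadic T m (j m)) \<longlonglongrightarrow> t"
    using dyadic_approximation[OF T t] by blast
  have "(\<lambda>m. B (dyadic T m (j m)) \<omega>) \<longlonglongrightarrow> B t \<omega>"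
    using T t by (intro continuous_on_tendsto_compose[OF B lim]) (auto simp: dyadic_def)
  moreover have "\<bar>B (dyadic T m (j m)) \<omega>\<bar> \<le> R" for m
    using abs_at_dyadic_le_sum_dyadic_l4[where B = B and \<omega> = \<omega> and T = T, OF B0 j[of m]] R[of m]
    by linarith
  ultimately show ?thesis
    by (intro LIMSEQ_le_const2[OF tendsto_rabs]) auto
qed

text \<open>The weights \<open>(10/9)\<^sup>k\<close> grow slower than \<open>(4/3)\<^sup>k\<close>, so this sum is integrable, but
  faster than \<open>1\<close>, so a bound on it makes \<open>dyadic_l4 B T k\<close> decay geometrically in \<open>k\<close>.\<close>

definition dyadic_weighted_sum :: "(real \<Rightarrow> 'w \<Rightarrow> real) \<Rightarrow> real \<Rightarrow> 'w \<Rightarrow> ennreal" where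
  "dyadic_weighted_sum B T \<omega> = (\<Sum>k. ennreal ((dyadic_l4 B T k \<omega>)^2 * (10/9)^k))"

lemma sqrt_le_arith_mean: "sqrt x \<le> l / 2 + x / (2 * l)" if "x \<ge> 0" "l > 0" for x l :: real
proof -
  have "2 * l * sqrt x \<le> x + l^2"
    using zero_le_power2[of "sqrt x - l"] that by (simp add: power2_eq_square algebra_simps)
  then show ?thesis using that by (simp add: field_simps power2_eq_square)
qed

context
  fixes M :: "'w measure" and B :: "real \<Rightarrow> 'w \<Rightarrow> real" and T :: real
  assumes BM: "std_BM M B" and T: "T > 0"
begin

lemma borel_measurable_dyadic_incr: "dyadic_incr B T k j \<in> borel_measurable M"
  unfolding dyadic_incr_def[abs_def] using T
  by (intro borel_measurable_diff std_BM_D(2)[OF BM]) (simp_all add: dyadic_def)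

lemma borel_measurable_dyadic_l4: "dyadic_l4 B T k \<in> borel_measurable M"
  unfolding dyadic_l4_def[abs_def] using borel_measurable_dyadic_incr by measurable

lemma nn_integral_sum_dyadic_incr_fourth:
  "(\<integral>\<^sup>+ \<omega>. ennreal (\<Sum>j<2^k. (dyadic_incr B T k j \<omega>)^4) \<partial>M) = ennreal (3 * T^2 / 2^k)"
proof -
  have "(\<integral>\<^sup>+ \<omega>. ennreal ((dyadic_incr B T k j \<omega>)^4) \<partial>M) = ennreal (3 * (T / 2^k)^2)" for j
  proof -
    have "dyadic T k j < dyadic T k (Suc j)" "dyadic T k (Suc j) - dyadic T k j = T / 2^k"
      unfolding dyadic_def using T by (simp_all add: field_simps)
    then show ?thesis
      unfolding dyadic_incr_def using BM_increment_fourth_moment[OF BM] T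
      by (simp add: dyadic_def)
  qed
  note fourth = this
  have "(\<integral>\<^sup>+ \<omega>. ennreal (\<Sum>j<2^k. (dyadic_incr B T k j \<omega>)^4) \<partial>M)
      = (\<integral>\<^sup>+ \<omega>. (\<Sum>j<2^k. ennreal ((dyadic_incr B T k j \<omega>)^4)) \<partial>M)"
    by (rule nn_integral_cong) (simp add: sum_ennreal)
  also have "\<dots> = (\<Sum>j<2^k. \<integral>\<^sup>+ \<omega>. ennreal ((dyadic_incr B T k j \<omega>)^4) \<partial>M)"
    by (rule nn_integral_sum) (use borel_measurable_dyadic_incr in measurable)
  also have "\<dots> = (\<Sum>j<(2::nat)^k. ennreal (3 * (T / 2^k)^2))"
    by (simp add: fourth)
  also have "\<dots> = ennreal (3 * T^2 / 2^k)"
    by (simp add: ennreal_of_nat_eq_real_of_nat ennreal_mult[symmetric] power2_eq_square field_simps)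
  finally show ?thesis .
qed

lemma nn_integral_dyadic_l4_square_le:
  "(\<integral>\<^sup>+ \<omega>. ennreal ((dyadic_l4 B T k \<omega>)^2) \<partial>M) \<le> ennreal (2 * T * (3/4)^k)"
proof -
  interpret prob_space M by (rule std_BM_D(1)[OF BM])
  define l where "l = T * (3/4)^k"
  have l: "l > 0" unfolding l_def using T by simp
  define S where "S \<omega> = (\<Sum>j<2^k. (dyadic_incr B T k j \<omega>)^4)" for \<omega>
  have S: "S \<omega> \<ge> 0" for \<omega> unfolding S_def by (intro sum_nonneg) simp
  have "S \<in> borel_measurable M" unfolding S_def[abs_def] using borel_measurable_dyadic_incr by measurable
  have pointwise: "ennreal ((dyadic_l4 B T k \<omega>)^2) \<le> ennreal (l / 2) + ennreal (1 / (2 * l)) * ennreal (S \<omega>)"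
    for \<omega>
  proof -
    have "(dyadic_l4 B T k \<omega>)^2 = sqrt (S \<omega>)" unfolding dyadic_l4_def S_def[symmetric] using S[of \<omega>] by simp
    then have "ennreal ((dyadic_l4 B T k \<omega>)^2) \<le> ennreal (l / 2 + 1 / (2 * l) * S \<omega>)"
      using sqrt_le_arith_mean[OF S l, of \<omega>] by (simp add: ennreal_leI)
    also have "\<dots> = ennreal (l / 2) + ennreal (1 / (2 * l)) * ennreal (S \<omega>)"
      using l S[of \<omega>] by (simp add: ennreal_plus ennreal_mult[symmetric])
    finally show ?thesis .
  qed
  have "(\<integral>\<^sup>+ \<omega>. ennreal ((dyadic_l4 B T k \<omega>)^2) \<partial>M)
      \<le> (\<integral>\<^sup>+ \<omega>. ennreal (l / 2) + ennreal (1 / (2 * l)) * ennreal (S \<omega>) \<partial>M)"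
    by (rule nn_integral_mono) (rule pointwise)
  also have "\<dots> = ennreal (l / 2) + ennreal (1 / (2 * l)) * ennreal (3 * T^2 / 2^k)"
    using \<open>S \<in> borel_measurable M\<close> unfolding S_def nn_integral_sum_dyadic_incr_fourth[symmetric]
    by (simp add: nn_integral_add nn_integral_cmult emeasure_space_1)
  also have "\<dots> = ennreal (l / 2 + 1 / (2 * l) * (3 * T^2 / 2^k))"
    using l by (simp add: ennreal_plus ennreal_mult[symmetric] del: times_divide_eq_right)
  also have "\<dots> \<le> ennreal (2 * T * (3/4)^k)"
  proof (rule ennreal_leI)
    have "1 / (2 * l) * (3 * T^2 / 2^k) = 3 / 2 * T * (2/3)^k"
      unfolding l_def using T by (simp add: field_simps power2_eq_square flip: power_mult_distrib)
    also have "\<dots> \<le> 3 / 2 * T * (3/4)^k"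
      using T by (intro mult_left_mono power_mono) auto
    finally show "l / 2 + 1 / (2 * l) * (3 * T^2 / 2^k) \<le> 2 * T * (3/4)^k" unfolding l_def by linarith
  qed
  finally show ?thesis .
qed

lemma borel_measurable_dyadic_weighted_sum: "dyadic_weighted_sum B T \<in> borel_measurable M"
  unfolding dyadic_weighted_sum_def[abs_def] using borel_measurable_dyadic_l4 by measurable

lemma nn_integral_dyadic_weighted_sum_finite: "integral\<^sup>N M (dyadic_weighted_sum B T) < \<infinity>"
proof -
  have "integral\<^sup>N M (dyadic_weighted_sum B T)
      = (\<Sum>k. \<integral>\<^sup>+ \<omega>. ennreal ((dyadic_l4 B T k \<omega>)^2 * (10/9)^k) \<partial>M)"
    unfolding dyadic_weighted_sum_def
    by (rule nn_integral_suminf) (use borel_measurable_dyadic_l4 in measurable)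
  also have "\<dots> = (\<Sum>k. \<integral>\<^sup>+ \<omega>. ennreal ((dyadic_l4 B T k \<omega>)^2) * ennreal ((10/9)^k) \<partial>M)"
    by (simp add: ennreal_mult)
  also have "\<dots> \<le> (\<Sum>k. ennreal (2 * T * (5/6)^k))"
  proof (intro suminf_le summableI)
    fix k
    have "(\<integral>\<^sup>+ \<omega>. ennreal ((dyadic_l4 B T k \<omega>)^2) * ennreal ((10/9)^k) \<partial>M)
        \<le> ennreal (2 * T * (3/4)^k) * ennreal ((10/9)^k)"
      using borel_measurable_dyadic_l4
      by (subst nn_integral_multc) (auto intro!: mult_right_mono nn_integral_dyadic_l4_square_le)
    also have "\<dots> = ennreal (2 * T * (5/6)^k)"
      using T by (simp add: ennreal_mult[symmetric] mult.assoc flip: power_mult_distrib)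
    finally show "(\<integral>\<^sup>+ \<omega>. ennreal ((dyadic_l4 B T k \<omega>)^2) * ennreal ((10/9)^k) \<partial>M)
        \<le> ennreal (2 * T * (5/6)^k)" .
  qed
  also have "\<dots> = ennreal (\<Sum>k. 2 * T * (5/6)^k)"
    using T by (intro suminf_ennreal2 summable_mult summable_geometric) auto
  finally show ?thesis by (simp add: le_less_trans)
qed
end

lemma BM_square_le_weighted_dyadic_l4:
  assumes BM: "std_BM M B" and T: "T > 0" and \<omega>: "\<omega> \<in> space M" and t: "t \<in> {0..T}"
    and sum: "dyadic_weighted_sum B T \<omega> = ennreal q" and "q \<ge> 0"
  shows "(B t \<omega>)^2 \<le> q / (1 - sqrt (9/10))^2"
proof -
  have "ennreal ((dyadic_l4 B T k \<omega>)^2 * (10/9)^k) \<le> dyadic_weighted_sum B T \<omega>" for k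
    unfolding dyadic_weighted_sum_def using sum_le_suminf[OF summableI, of "{k}"] by simp
  then have q: "(dyadic_l4 B T k \<omega>)^2 * (10/9)^k \<le> q" for k using sum \<open>q \<ge> 0\<close> by simp
  define p :: real where "p = sqrt (9/10)"
  have p: "0 \<le> p" "p < 1" unfolding p_def by simp_all
  have l4: "dyadic_l4 B T k \<omega> \<le> sqrt q * p^k" for k
  proof -
    have "(dyadic_l4 B T k \<omega>)^2 \<le> q * (9/10)^k"
      using q[of k] by (simp add: field_simps power_divide)
    then have "sqrt ((dyadic_l4 B T k \<omega>)^2) \<le> sqrt (q * (9/10)^k)" by (rule real_sqrt_le_mono)
    moreover have "sqrt ((dyadic_l4 B T k \<omega>)^2) = dyadic_l4 B T k \<omega>" using dyadic_l4_nonneg[of B T k \<omega>] by simp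
    moreover have "sqrt (q * (9/10)^k) = sqrt q * p^k" unfolding p_def by (simp add: real_sqrt_mult real_sqrt_power)
    ultimately show ?thesis by simp
  qed
  have "(\<Sum>k\<le>m. dyadic_l4 B T k \<omega>) \<le> sqrt q / (1 - p)" for m
  proof -
    have "(\<Sum>k\<le>m. p^k) \<le> (\<Sum>k. p^k)"
      using p by (intro sum_le_suminf summable_geometric) auto
    then have "(\<Sum>k\<le>m. p^k) \<le> 1 / (1 - p)" using suminf_geometric[of p] p by simp
    then have "sqrt q * (\<Sum>k\<le>m. p^k) \<le> sqrt q / (1 - p)"
      using mult_left_mono[of _ _ "sqrt q"] \<open>q \<ge> 0\<close> by fastforce
    moreover have "(\<Sum>k\<le>m. dyadic_l4 B T k \<omega>) \<le> sqrt q * (\<Sum>k\<le>m. p^k)"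
      unfolding sum_distrib_left by (rule sum_mono) (rule l4)
    ultimately show ?thesis by linarith
  qed
  then have "\<bar>B t \<omega>\<bar> \<le> sqrt q / (1 - p)"
    by (rule abs_le_if_dyadic_sums_le[where B = B and \<omega> = \<omega>, OF std_BM_D(3,4)[OF BM \<omega>] T t])
  then have "\<bar>B t \<omega>\<bar>^2 \<le> (sqrt q / (1 - p))^2" by (rule power_mono) simp
  then show ?thesis using \<open>q \<ge> 0\<close> unfolding p_def by (simp add: power_divide)
qed

lemma BM_sup_square_majorant:
  assumes BM: "std_BM M B" and "T \<ge> 0"
  obtains Z where "Z \<in> borel_measurable M" and "integral\<^sup>N M Z < \<infinity>"
    and "\<And>\<omega> t. \<omega> \<in> space M \<Longrightarrow> t \<in> {0..T} \<Longrightarrow> ennreal ((B t \<omega>)^2) \<le> Z \<omega>"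
proof (cases "T = 0")
  case True
  then show ?thesis by (intro that[of "\<lambda>_. 0"]) (auto simp: std_BM_D(3)[OF BM])
next
  case False
  then have T: "T > 0" using \<open>T \<ge> 0\<close> by simp
  define c :: real where "c = 1 / (1 - sqrt (9/10))^2"
  show ?thesis
  proof (rule that[of "\<lambda>\<omega>. ennreal c * dyadic_weighted_sum B T \<omega>"])
    show "(\<lambda>\<omega>. ennreal c * dyadic_weighted_sum B T \<omega>) \<in> borel_measurable M"
      using borel_measurable_dyadic_weighted_sum[OF BM T] by measurable
    show "integral\<^sup>N M (\<lambda>\<omega>. ennreal c * dyadic_weighted_sum B T \<omega>) < \<infinity>"
      using nn_integral_dyadic_weighted_sum_finite[OF BM T] borel_measurable_dyadic_weighted_sum[OF BM T]
      by (simp add: nn_integral_cmult ennreal_mult_less_top)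
    fix \<omega> t assume \<omega>: "\<omega> \<in> space M" and t: "t \<in> {0..T}"
    show "ennreal ((B t \<omega>)^2) \<le> ennreal c * dyadic_weighted_sum B T \<omega>"
    proof (cases "dyadic_weighted_sum B T \<omega>")
      case (real q)
      then have "(B t \<omega>)^2 \<le> c * q"
        using BM_square_le_weighted_dyadic_l4[OF BM T \<omega> t] unfolding c_def by simp
      then show ?thesis using real by (simp add: ennreal_mult[symmetric] ennreal_leI c_def)
    qed (simp add: c_def ennreal_mult_top)
  qed
qed

section \<open>The reduced equation for the first coordinate\<close>

lemma summable_power4_if_weighted_square_summable:
  fixes a :: "nat \<Rightarrow> real"
  assumes "summable (\<lambda>n. (1 + (real n)^2)^5 * (a n)^2)"
  shows "summable (\<lambda>n. real n ^ 4 * \<bar>a n\<bar>)"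
proof -
  have bound: "real n ^ 4 * \<bar>a n\<bar> \<le> ((1 + (real n)^2)^5 * (a n)^2 + inverse (real n ^ 2)) / 2" for n
  proof -
    define w where "w = (1 + (real n)^2)^5"
    have w: "w > 0" unfolding w_def by (simp add: add_pos_nonneg)
    have "0 \<le> (w * \<bar>a n\<bar> - real n ^ 4)^2" by simp
    then have "2 * (real n ^ 4 * \<bar>a n\<bar>) * w \<le> w * (a n)^2 * w + real n ^ 8"
      by (simp add: power2_eq_square algebra_simps flip: power_add)
    then have am_gm: "2 * (real n ^ 4 * \<bar>a n\<bar>) \<le> w * (a n)^2 + real n ^ 8 / w"
      using w by (simp add: field_simps)
    have "real n ^ 8 / w \<le> inverse (real n ^ 2)"
    proof (cases "n = 0")
      case False
      have "(real n ^ 2) ^ 5 \<le> w" unfolding w_def by (rule power_mono) auto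
      then have "real n ^ 8 * real n ^ 2 \<le> w" by (simp flip: power_mult power_add)
      then show ?thesis using w False by (simp add: field_simps)
    qed simp
    with am_gm show ?thesis unfolding w_def by simp
  qed
  have "summable (\<lambda>n. ((1 + (real n)^2)^5 * (a n)^2 + inverse (real n ^ 2)) / 2)"
    by (intro summable_divide summable_add assms inverse_power_summable) simp
  then show ?thesis by (rule summable_comparison_test[rotated]) (use bound in auto)
qed

locale coupled_system =
  fixes a :: "nat \<Rightarrow> real" and x0 :: real and u0 v0 :: "nat \<Rightarrow> real"
  assumes a_nonneg: "\<And>n. n \<ge> 1 \<Longrightarrow> a n \<ge> 0"
    and a_moment: "summable (\<lambda>n. real n ^ 4 * \<bar>a n\<bar>)"
    and u0_zero: "u0 0 = 0" and v0_zero: "v0 0 = 0"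
    and u0_square_summable: "summable (\<lambda>n. (u0 n)^2)"
    and v0_square_summable: "summable (\<lambda>n. (v0 n)^2)"
begin

definition phi :: "real \<Rightarrow> real" where
  "phi z = (\<Sum>n. real n * sqrt (a n) * (u0 n * sin (real n * z) + v0 n * cos (real n * z)))"

definition psi :: "real \<Rightarrow> real" where
  "psi z = (\<Sum>n. real n * a n * sin (real n * z))"

definition memory :: "(real \<Rightarrow> real) \<Rightarrow> real \<Rightarrow> real" where
  "memory X s = integral {0..s} (\<lambda>r. psi (X s - X r))"

definition reduced_drift :: "(real \<Rightarrow> real) \<Rightarrow> real \<Rightarrow> real" where
  "reduced_drift X s = phi (X s) + memory X s"

definition phi_weight :: "nat \<Rightarrow> real" where
  "phi_weight n = real n ^ 2 * \<bar>sqrt (a n)\<bar> * (\<bar>u0 n\<bar> + \<bar>v0 n\<bar>)"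

definition psi_weight :: "nat \<Rightarrow> real" where
  "psi_weight n = real n ^ 2 * \<bar>a n\<bar>"

definition K :: real where
  "K = suminf phi_weight + suminf psi_weight + 1"

lemma abs_sqrt_a_square: "\<bar>sqrt (a n)\<bar>^2 = \<bar>a n\<bar>"
  by (metis power2_abs power2_eq_square real_sqrt_mult_self)

lemma real_le_square: "real n \<le> real n ^ 2"
  by (cases n) (auto simp: power2_eq_square)

lemma summable_phi_weight: "summable phi_weight"
proof -
  have "phi_weight n \<le> real n ^ 4 * \<bar>a n\<bar> + (u0 n)^2 + (v0 n)^2" for n
  proof -
    have "2 * (real n ^ 2 * \<bar>sqrt (a n)\<bar> * \<bar>w\<bar>) \<le> (real n ^ 2)^2 * \<bar>sqrt (a n)\<bar>^2 + w^2" for w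
      using zero_le_power2[of "real n ^ 2 * \<bar>sqrt (a n)\<bar> - \<bar>w\<bar>"]
      by (simp add: power2_eq_square algebra_simps)
    from this[of "u0 n"] this[of "v0 n"] show ?thesis
      unfolding phi_weight_def abs_sqrt_a_square
      by (simp add: power_mult[symmetric] algebra_simps)
        (use zero_le_power2[of "u0 n"] zero_le_power2[of "v0 n"] in linarith)
  qed
  moreover have "phi_weight n \<ge> 0" for n unfolding phi_weight_def by simp
  ultimately show ?thesis
    by (intro summable_comparison_test[OF _ summable_add[OF summable_add[OF a_moment
          u0_square_summable] v0_square_summable]]) auto
qed

lemma summable_psi_weight: "summable psi_weight"
proof -
  have "psi_weight n \<le> real n ^ 4 * \<bar>a n\<bar>" for n
  proof (cases "n = 0")
    case False
    then have "real n ^ 2 \<le> real n ^ 4" by (intro power_increasing) auto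
    then show ?thesis unfolding psi_weight_def by (intro mult_right_mono) auto
  qed (simp add: psi_weight_def)
  then show ?thesis by (intro summable_comparison_test[OF _ a_moment]) (auto simp: psi_weight_def)
qed

lemma suminf_weights_nonneg: "suminf phi_weight \<ge> 0" "suminf psi_weight \<ge> 0"
  by (intro suminf_nonneg summable_phi_weight summable_psi_weight;
      simp add: phi_weight_def psi_weight_def)+

lemma suminf_weights_le_K: "suminf phi_weight \<le> K" "suminf psi_weight \<le> K"
  using suminf_weights_nonneg unfolding K_def by simp_all

lemma K_pos: "K > 0"
  using suminf_weights_nonneg unfolding K_def by simp

lemma phi_term_bounds:
  defines "f \<equiv> \<lambda>n z. real n * sqrt (a n) * (u0 n * sin (real n * z) + v0 n * cos (real n * z))"
  shows "\<bar>f n z\<bar> \<le> phi_weight n" and "\<bar>f n z - f n w\<bar> \<le> phi_weight n * \<bar>z - w\<bar>"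
proof -
  have "\<bar>u0 n * sin (real n * z)\<bar> \<le> \<bar>u0 n\<bar>" "\<bar>v0 n * cos (real n * z)\<bar> \<le> \<bar>v0 n\<bar>"
    by (simp_all add: abs_mult mult_left_le)
  then have "\<bar>u0 n * sin (real n * z) + v0 n * cos (real n * z)\<bar> \<le> \<bar>u0 n\<bar> + \<bar>v0 n\<bar>"
    using abs_triangle_ineq[of "u0 n * sin (real n * z)" "v0 n * cos (real n * z)"] by linarith
  then have "\<bar>f n z\<bar> \<le> real n * \<bar>sqrt (a n)\<bar> * (\<bar>u0 n\<bar> + \<bar>v0 n\<bar>)"
    unfolding f_def by (simp add: abs_mult mult_left_mono)
  also have "\<dots> \<le> phi_weight n"
    unfolding phi_weight_def by (intro mult_right_mono real_le_square) auto
  finally show "\<bar>f n z\<bar> \<le> phi_weight n" .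
  have "\<bar>(u0 n * sin (real n * z) + v0 n * cos (real n * z))
      - (u0 n * sin (real n * w) + v0 n * cos (real n * w))\<bar>
      \<le> \<bar>u0 n\<bar> * \<bar>sin (real n * z) - sin (real n * w)\<bar>
        + \<bar>v0 n\<bar> * \<bar>cos (real n * z) - cos (real n * w)\<bar>"
  proof -
    have "(u0 n * sin (real n * z) + v0 n * cos (real n * z))
        - (u0 n * sin (real n * w) + v0 n * cos (real n * w))
        = u0 n * (sin (real n * z) - sin (real n * w)) + v0 n * (cos (real n * z) - cos (real n * w))"
      by (simp add: algebra_simps)
    then show ?thesis
      using abs_triangle_ineq[of "u0 n * (sin (real n * z) - sin (real n * w))"
          "v0 n * (cos (real n * z) - cos (real n * w))"]
      by (simp add: abs_mult)
  qed
  also have "\<dots> \<le> (\<bar>u0 n\<bar> + \<bar>v0 n\<bar>) * (real n * \<bar>z - w\<bar>)"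
    using abs_sin_mult_diff_le[of "real n" z w] abs_cos_mult_diff_le[of "real n" z w]
    by (simp add: distrib_right mult_left_mono add_mono)
  finally have "\<bar>f n z - f n w\<bar> \<le> real n * \<bar>sqrt (a n)\<bar> * ((\<bar>u0 n\<bar> + \<bar>v0 n\<bar>) * (real n * \<bar>z - w\<bar>))"
    unfolding f_def by (simp add: abs_mult mult_left_mono flip: right_diff_distrib)
  then show "\<bar>f n z - f n w\<bar> \<le> phi_weight n * \<bar>z - w\<bar>"
    unfolding phi_weight_def by (simp add: power2_eq_square mult_ac)
qed

lemma psi_term_bounds:
  "\<bar>real n * a n * sin (real n * z)\<bar> \<le> psi_weight n"
  "\<bar>real n * a n * sin (real n * z) - real n * a n * sin (real n * w)\<bar> \<le> psi_weight n * \<bar>z - w\<bar>"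
proof -
  have "\<bar>real n * a n * sin (real n * z)\<bar> \<le> real n * \<bar>a n\<bar>"
    using abs_sin_le_one[of "real n * z"] by (simp add: abs_mult mult_left_le)
  also have "\<dots> \<le> psi_weight n"
    unfolding psi_weight_def by (intro mult_right_mono real_le_square) auto
  finally show "\<bar>real n * a n * sin (real n * z)\<bar> \<le> psi_weight n" .
  have "\<bar>real n * a n * sin (real n * z) - real n * a n * sin (real n * w)\<bar>
     = real n * \<bar>a n\<bar> * \<bar>sin (real n * z) - sin (real n * w)\<bar>"
    by (simp add: abs_mult flip: right_diff_distrib)
  also have "\<dots> \<le> real n * \<bar>a n\<bar> * (real n * \<bar>z - w\<bar>)"
    using abs_sin_mult_diff_le[of "real n" z w] by (intro mult_left_mono) auto
  finally show "\<bar>real n * a n * sin (real n * z) - real n * a n * sin (real n * w)\<bar>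
      \<le> psi_weight n * \<bar>z - w\<bar>"
    unfolding psi_weight_def by (simp add: power2_eq_square mult_ac)
qed

lemmas phi_series = bounded_lipschitz_suminf[OF summable_phi_weight phi_term_bounds]
lemmas psi_series = bounded_lipschitz_suminf[OF summable_psi_weight psi_term_bounds]

lemma abs_phi_le: "\<bar>phi z\<bar> \<le> K"
  using phi_series(2)[of z] suminf_weights_le_K unfolding phi_def by linarith

lemma abs_psi_le: "\<bar>psi z\<bar> \<le> K"
  using psi_series(2)[of z] suminf_weights_le_K unfolding psi_def by linarith

lemma phi_lipschitz: "\<bar>phi z - phi w\<bar> \<le> K * \<bar>z - w\<bar>"
  using phi_series(3)[of z w] mult_right_mono[OF suminf_weights_le_K(1), of "\<bar>z - w\<bar>"]
  unfolding phi_def by linarith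

lemma psi_lipschitz: "\<bar>psi z - psi w\<bar> \<le> K * \<bar>z - w\<bar>"
  using psi_series(3)[of z w] mult_right_mono[OF suminf_weights_le_K(2), of "\<bar>z - w\<bar>"]
  unfolding psi_def by linarith

lemma continuous_on_phi: "continuous_on S phi"
  by (rule continuous_on_if_lipschitz[OF phi_lipschitz]) (use K_pos in simp)

lemma continuous_on_psi: "continuous_on S psi"
  by (rule continuous_on_if_lipschitz[OF psi_lipschitz]) (use K_pos in simp)

lemma continuous_on_psi_diff: "continuous_on A X \<Longrightarrow> continuous_on A (\<lambda>r. psi (X s - X r))"
  by (rule continuous_on_compose2[OF continuous_on_psi[of UNIV]]) (auto intro!: continuous_intros)

lemma abs_memory_le:
  assumes "s \<ge> 0" "continuous_on {0..s} X"
  shows "\<bar>memory X s\<bar> \<le> K * s"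
proof -
  have "norm (integral {0..s} (\<lambda>r. psi (X s - X r))) \<le> K * (s - 0)"
    by (rule integral_bound) (use assms abs_psi_le continuous_on_psi_diff in auto)
  then show ?thesis unfolding memory_def by simp
qed

lemma abs_reduced_drift_le:
  assumes "s \<ge> 0" "continuous_on {0..s} X"
  shows "\<bar>reduced_drift X s\<bar> \<le> K * (1 + s)"
  using abs_memory_le[OF assms] abs_phi_le[of "X s"] unfolding reduced_drift_def
  by (simp add: algebra_simps)

lemma reduced_drift_lipschitz:
  assumes s: "s \<ge> 0" and X1: "continuous_on {0..s} X1" and X2: "continuous_on {0..s} X2"
    and close: "\<And>r. r \<in> {0..s} \<Longrightarrow> \<bar>X1 r - X2 r\<bar> \<le> e"
  shows "\<bar>reduced_drift X1 s - reduced_drift X2 s\<bar> \<le> K * (1 + 2 * s) * e"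
proof -
  have "norm (integral {0..s} (\<lambda>r. psi (X1 s - X1 r) - psi (X2 s - X2 r))) \<le> (K * (2 * e)) * (s - 0)"
  proof (rule integral_bound)
    fix r assume r: "r \<in> {0..s}"
    have "\<bar>(X1 s - X1 r) - (X2 s - X2 r)\<bar> \<le> 2 * e"
      using close[of s] close[OF r] s by (auto simp: abs_le_iff)
    then show "norm (psi (X1 s - X1 r) - psi (X2 s - X2 r)) \<le> K * (2 * e)"
      using psi_lipschitz[of "X1 s - X1 r" "X2 s - X2 r"] K_pos
      by (simp add: order_trans[OF _ mult_left_mono])
  qed (use s X1 X2 in \<open>auto intro!: continuous_intros continuous_on_psi_diff\<close>)
  then have "\<bar>memory X1 s - memory X2 s\<bar> \<le> K * (2 * e) * s"
    unfolding memory_def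
    by (subst integral_diff[symmetric])
      (auto intro!: integrable_continuous_real continuous_on_psi_diff X1 X2)
  moreover have "\<bar>phi (X1 s) - phi (X2 s)\<bar> \<le> K * e"
    using order_trans[OF phi_lipschitz mult_left_mono[OF close]] s K_pos by simp
  ultimately show ?thesis unfolding reduced_drift_def by (simp add: algebra_simps)
qed

lemma abs_memory_increment_le:
  assumes X: "continuous_on {0..T} X" and s: "s \<in> {0..T}" and s': "s' \<in> {0..T}" and "s \<le> s'"
  shows "\<bar>memory X s' - memory X s\<bar> \<le> (K * T) * \<bar>X s' - X s\<bar> + K * \<bar>s' - s\<bar>"
proof -
  have Xs: "continuous_on {0..s} X" and Xs': "continuous_on {0..s'} X" and Xss': "continuous_on {s..s'} X"
    using X s s' by (auto intro: continuous_on_subset)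
  have split: "memory X s' = integral {0..s} (\<lambda>r. psi (X s' - X r)) + integral {s..s'} (\<lambda>r. psi (X s' - X r))"
    unfolding memory_def
    by (rule Henstock_Kurzweil_Integration.integral_combine[symmetric])
       (use assms in \<open>auto intro!: integrable_continuous_real continuous_on_psi_diff Xs'\<close>)
  have "\<bar>integral {0..s} (\<lambda>r. psi (X s' - X r)) - memory X s\<bar> \<le> (K * \<bar>X s' - X s\<bar>) * (s - 0)"
  proof -
    have "norm (integral {0..s} (\<lambda>r. psi (X s' - X r) - psi (X s - X r)))
        \<le> (K * \<bar>X s' - X s\<bar>) * (s - 0)"
    proof (rule integral_bound)
      fix r show "norm (psi (X s' - X r) - psi (X s - X r)) \<le> K * \<bar>X s' - X s\<bar>"
        using psi_lipschitz[of "X s' - X r" "X s - X r"] by simp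
    qed (use s in \<open>auto intro!: continuous_intros continuous_on_psi_diff Xs\<close>)
    then show ?thesis unfolding memory_def
      by (subst integral_diff[symmetric])
        (auto intro!: integrable_continuous_real continuous_on_psi_diff Xs)
  qed
  moreover have "(K * \<bar>X s' - X s\<bar>) * s \<le> (K * T) * \<bar>X s' - X s\<bar>"
    using s K_pos by (simp add: mult_left_mono mult_right_mono mult_ac)
  moreover have "\<bar>integral {s..s'} (\<lambda>r. psi (X s' - X r))\<bar> \<le> K * (s' - s)"
    using integral_bound[of s s' "\<lambda>r. psi (X s' - X r)" K] \<open>s \<le> s'\<close> abs_psi_le
      continuous_on_psi_diff[OF Xss'] by simp
  ultimately show ?thesis using \<open>s \<le> s'\<close> unfolding split by (simp add: abs_le_iff)
qed

lemma continuous_on_reduced_drift: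
  assumes T: "T \<ge> 0" and X: "continuous_on {0..T} X"
  shows "continuous_on {0..T} (reduced_drift X)"
proof -
  have "continuous_on {0..T} (memory X)"
  proof (rule continuous_on_dominated_increments[OF X])
    fix s s' assume s: "s \<in> {0..T}" and s': "s' \<in> {0..T}"
    show "\<bar>memory X s' - memory X s\<bar> \<le> (K * T) * \<bar>X s' - X s\<bar> + K * \<bar>s' - s\<bar>"
    proof (cases "s \<le> s'")
      case True
      then show ?thesis using abs_memory_increment_le[OF X s s'] by simp
    next
      case False
      then show ?thesis using abs_memory_increment_le[OF X s' s] by (simp add: abs_minus_commute)
    qed
  qed (use T K_pos in auto)
  moreover have "continuous_on {0..T} (\<lambda>s. phi (X s))"
    by (rule continuous_on_compose2[OF continuous_on_phi[of UNIV] X]) simp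
  ultimately show ?thesis unfolding reduced_drift_def[abs_def] by (intro continuous_intros)
qed

lemma integrable_reduced_drift:
  "t \<ge> 0 \<Longrightarrow> continuous_on {0..t} X \<Longrightarrow> reduced_drift X integrable_on {0..t}"
  by (rule integrable_continuous_real, rule continuous_on_reduced_drift)

lemma abs_integral_reduced_drift_diff_le:
  fixes T m :: real
  defines "L \<equiv> K * (1 + 2 * T)"
  assumes X1: "continuous_on {0..T} X1" and X2: "continuous_on {0..T} X2" and m: "m \<ge> 0"
    and close: "\<And>r. r \<in> {0..T} \<Longrightarrow> \<bar>X1 r - X2 r\<bar> \<le> m * (L * r) ^ k / fact k"
    and t: "t \<in> {0..T}"
  shows "\<bar>integral {0..t} (\<lambda>s. reduced_drift X1 s - reduced_drift X2 s)\<bar> \<le> m * (L * t) ^ Suc k / fact (Suc k)"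
proof -
  have L: "L > 0" unfolding L_def using K_pos t by (simp add: add_pos_nonneg)
  have sub: "continuous_on {0..s} X1" "continuous_on {0..s} X2" if "s \<in> {0..t}" for s
    using X1 X2 that t by (auto intro: continuous_on_subset)
  have "norm (integral {0..t} (\<lambda>s. reduced_drift X1 s - reduced_drift X2 s))
      \<le> integral {0..t} (\<lambda>s. L * m * (L * s) ^ k / fact k)"
  proof (rule integral_norm_bound_integral)
    show "(\<lambda>s. reduced_drift X1 s - reduced_drift X2 s) integrable_on {0..t}"
      using t sub by (intro integrable_diff integrable_reduced_drift) auto
    show "(\<lambda>s. L * m * (L * s) ^ k / fact k) integrable_on {0..t}"
      by (rule has_integral_integrable[OF has_integral_power_over_fact]) (use t in simp)
    fix s assume s: "s \<in> {0..t}"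
    have "\<bar>X1 r - X2 r\<bar> \<le> m * (L * s) ^ k / fact k" if r: "r \<in> {0..s}" for r
    proof -
      have "(L * r) ^ k \<le> (L * s) ^ k" using r L by (intro power_mono mult_left_mono) auto
      then have "m * (L * r) ^ k / fact k \<le> m * (L * s) ^ k / fact k"
        using m by (intro divide_right_mono mult_left_mono) auto
      moreover have "r \<in> {0..T}" using r s t by auto
      ultimately show ?thesis using close by (meson order_trans)
    qed
    then have "\<bar>reduced_drift X1 s - reduced_drift X2 s\<bar> \<le> K * (1 + 2 * s) * (m * (L * s) ^ k / fact k)"
      using s by (intro reduced_drift_lipschitz[OF _ sub[OF s]]) auto
    also have "\<dots> \<le> L * (m * (L * s) ^ k / fact k)"
      unfolding L_def using s t K_pos m L by (intro mult_right_mono) auto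
    finally show "norm (reduced_drift X1 s - reduced_drift X2 s) \<le> L * m * (L * s) ^ k / fact k"
      by simp
  qed
  also have "\<dots> = m * (L * t) ^ Suc k / fact (Suc k)"
    by (rule integral_unique[OF has_integral_power_over_fact]) (use t in simp)
  finally show ?thesis by simp
qed

lemma reduced_equation_unique:
  assumes X1: "\<And>T. continuous_on {0..T} X1" and X2: "\<And>T. continuous_on {0..T} X2"
    and eq1: "\<And>t. t \<ge> 0 \<Longrightarrow> (reduced_drift X1 has_integral (X1 t - c t)) {0..t}"
    and eq2: "\<And>t. t \<ge> 0 \<Longrightarrow> (reduced_drift X2 has_integral (X2 t - c t)) {0..t}"
    and t: "t \<ge> 0"
  shows "X1 t = X2 t"
proof -
  define L where "L = K * (1 + 2 * t)"
  have "bounded ((\<lambda>r. X1 r - X2 r) ` {0..t})"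
    by (intro compact_imp_bounded compact_continuous_image continuous_on_diff X1 X2 compact_Icc)
  then obtain m where "\<forall>x \<in> (\<lambda>r. X1 r - X2 r) ` {0..t}. norm x \<le> m"
    unfolding bounded_iff by blast
  then have m: "\<And>r. r \<in> {0..t} \<Longrightarrow> \<bar>X1 r - X2 r\<bar> \<le> m" by auto
  have "m \<ge> 0" using m[of 0] t by force
  have diff: "X1 r - X2 r = integral {0..r} (\<lambda>s. reduced_drift X1 s - reduced_drift X2 s)" if "r \<ge> 0" for r
    using eq1[OF that] eq2[OF that]
    by (simp add: integral_diff has_integral_integrable integral_unique)
  have "\<forall>r\<in>{0..t}. \<bar>X1 r - X2 r\<bar> \<le> m * (L * r) ^ k / fact k" for k
  proof (induction k)
    case 0 then show ?case using m by simp
  next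
    case (Suc k)
    show ?case
    proof
      fix r assume r: "r \<in> {0..t}"
      have "\<bar>integral {0..r} (\<lambda>s. reduced_drift X1 s - reduced_drift X2 s)\<bar>
          \<le> m * (L * r) ^ Suc k / fact (Suc k)"
        unfolding L_def
        by (rule abs_integral_reduced_drift_diff_le[OF X1 X2 \<open>m \<ge> 0\<close> _ r])
          (use Suc.IH in \<open>simp add: L_def\<close>)
      then show "\<bar>X1 r - X2 r\<bar> \<le> m * (L * r) ^ Suc k / fact (Suc k)"
        using diff[of r] r by simp
    qed
  qed
  then have "\<bar>X1 t - X2 t\<bar> \<le> 0"
    using t by (intro le_zero_if_le_power_over_fact[of _ m "L * t"]) auto
  then show ?thesis by simp
qed

definition picard_step :: "(real \<Rightarrow> real) \<Rightarrow> (real \<Rightarrow> real) \<Rightarrow> real \<Rightarrow> real" where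
  "picard_step b X t = x0 + b t + integral {0..t} (reduced_drift X)"

primrec picard :: "(real \<Rightarrow> real) \<Rightarrow> nat \<Rightarrow> real \<Rightarrow> real" where
  "picard b 0 = (\<lambda>t. x0 + b t)"
| "picard b (Suc k) = picard_step b (picard b k)"

definition picard_limit :: "(real \<Rightarrow> real) \<Rightarrow> real \<Rightarrow> real" where
  "picard_limit b t = lim (\<lambda>k. picard b k t)"

context
  fixes b :: "real \<Rightarrow> real"
  assumes b: "\<And>T. continuous_on {0..T} b"
begin

lemma continuous_on_picard: "continuous_on {0..T} (picard b k)"
proof (induction k arbitrary: T)
  case (Suc k)
  show ?case
  proof (cases "T \<ge> 0")
    case True
    have "continuous_on {0..T} (\<lambda>t. integral {0..t} (reduced_drift (picard b k)))"
      by (intro indefinite_integral_continuous_1 integrable_reduced_drift True Suc.IH)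
    then show ?thesis unfolding picard.simps picard_step_def[abs_def] by (intro continuous_intros b)
  qed simp
qed (simp, intro continuous_intros b)

lemma picard_Suc_diff:
  assumes "t \<ge> 0"
  shows "picard b (Suc (Suc k)) t - picard b (Suc k) t
    = integral {0..t} (\<lambda>s. reduced_drift (picard b (Suc k)) s - reduced_drift (picard b k) s)"
proof -
  have "integral {0..t} (\<lambda>s. reduced_drift (picard b (Suc k)) s - reduced_drift (picard b k) s)
      = integral {0..t} (reduced_drift (picard b (Suc k))) - integral {0..t} (reduced_drift (picard b k))"
    using assms by (intro integral_diff integrable_reduced_drift continuous_on_picard)
  then show ?thesis by (simp add: picard_step_def)
qed

lemma abs_picard_increment_le:
  assumes t: "t \<in> {0..T}"
  shows "\<bar>picard b (Suc k) t - picard b k t\<bar> \<le> K * T * (1 + T) * (K * (1 + 2 * T) * t) ^ k / fact k"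
  using t
proof (induction k arbitrary: t)
  case 0
  have "\<bar>reduced_drift (picard b 0) s\<bar> \<le> K * (1 + T)" if s: "s \<in> {0..t}" for s
  proof -
    have "\<bar>reduced_drift (picard b 0) s\<bar> \<le> K * (1 + s)"
      using s by (intro abs_reduced_drift_le continuous_on_picard) auto
    also have "\<dots> \<le> K * (1 + T)" using s 0 K_pos by (intro mult_left_mono) auto
    finally show ?thesis .
  qed
  then have "norm (integral {0..t} (reduced_drift (picard b 0))) \<le> K * (1 + T) * (t - 0)"
    using 0 by (intro integral_bound continuous_on_reduced_drift continuous_on_picard) auto
  also have "\<dots> \<le> K * T * (1 + T)"
    using 0 K_pos by (simp add: mult_left_mono mult_right_mono mult_ac)
  finally show ?case by (simp add: picard_step_def)
next
  case (Suc k)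
  have "t \<ge> 0" "K * T * (1 + T) \<ge> 0" using Suc.prems K_pos by simp_all
  then show ?case
    unfolding picard_Suc_diff[OF \<open>t \<ge> 0\<close>]
    by (intro abs_integral_reduced_drift_diff_le continuous_on_picard Suc.IH Suc.prems)
qed

lemma uniform_limit_picard:
  assumes T: "T \<ge> 0"
  shows "uniform_limit {0..T} (picard b) (picard_limit b) sequentially"
proof -
  define M where "M k = K * T * (1 + T) * (K * (1 + 2 * T) * T) ^ k / fact k" for k
  have bound: "norm (picard b (Suc k) t - picard b k t) \<le> M k" if t: "t \<in> {0..T}" for k t
  proof -
    have "(K * (1 + 2 * T) * t) ^ k \<le> (K * (1 + 2 * T) * T) ^ k"
      using t K_pos by (intro power_mono mult_left_mono) auto
    then have "K * T * (1 + T) * (K * (1 + 2 * T) * t) ^ k / fact k \<le> M k"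
      unfolding M_def using T K_pos by (intro divide_right_mono mult_left_mono) auto
    then show ?thesis using abs_picard_increment_le[OF t, of k] by simp
  qed
  have "summable M"
    using summable_mult[OF summable_exp[of "K * (1 + 2 * T) * T"], of "K * T * (1 + T)"]
    unfolding M_def by (simp add: divide_inverse mult_ac)
  have sums: "uniform_limit {0..T} (\<lambda>n t. \<Sum>j<n. picard b (Suc j) t - picard b j t)
      (\<lambda>t. \<Sum>j. picard b (Suc j) t - picard b j t) sequentially"
    by (rule Weierstrass_m_test[OF bound \<open>summable M\<close>])
  have telescope: "picard b n t = picard b 0 t + (\<Sum>j<n. picard b (Suc j) t - picard b j t)" for n t
    using sum_lessThan_telescope[of "\<lambda>j. picard b j t" n] by (simp del: picard.simps)
  have "uniform_limit {0..T} (\<lambda>n t. picard b 0 t + (\<Sum>j<n. picard b (Suc j) t - picard b j t))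
      (\<lambda>t. picard b 0 t + (\<Sum>j. picard b (Suc j) t - picard b j t)) sequentially"
    by (intro uniform_limit_intros sums)
  then have "uniform_limit {0..T} (picard b) (\<lambda>t. picard b 0 t + (\<Sum>j. picard b (Suc j) t - picard b j t))
      sequentially"
    by (simp only: telescope[symmetric])
  moreover have "picard b 0 t + (\<Sum>j. picard b (Suc j) t - picard b j t) = picard_limit b t"
    if "t \<in> {0..T}" for t
    using tendsto_uniform_limitI[OF calculation that] unfolding picard_limit_def
    by (intro limI[symmetric])
  ultimately show ?thesis
    using uniform_limit_cong'[of "{0..T}" "picard b" "picard b"
        "\<lambda>t. picard b 0 t + (\<Sum>j. picard b (Suc j) t - picard b j t)" "picard_limit b"]
    by simp
qed

lemma picard_tendsto: "t \<ge> 0 \<Longrightarrow> (\<lambda>k. picard b k t) \<longlonglongrightarrow> picard_limit b t"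
  using tendsto_uniform_limitI[OF uniform_limit_picard] by auto

lemma continuous_on_picard_limit: "continuous_on {0..T} (picard_limit b)"
proof (cases "T \<ge> 0")
  case True
  show ?thesis
    by (rule uniform_limit_theorem[OF _ uniform_limit_picard[OF True]])
      (intro always_eventually allI continuous_on_picard, simp)
qed simp

lemma uniform_limit_reduced_drift_picard:
  assumes t: "t \<ge> 0"
  shows "uniform_limit {0..t} (\<lambda>k. reduced_drift (picard b k)) (reduced_drift (picard_limit b)) sequentially"
  unfolding uniform_limit_iff
proof (intro allI impI)
  fix e :: real assume e: "e > 0"
  define L where "L = K * (1 + 2 * t)"
  have L: "L > 0" unfolding L_def using K_pos t by (simp add: add_pos_nonneg)
  have "\<forall>\<^sub>F k in sequentially. \<forall>s\<in>{0..t}. dist (picard b k s) (picard_limit b s) < e / (2 * L)"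
    using uniform_limit_picard[OF t] e L unfolding uniform_limit_iff by simp
  then show "\<forall>\<^sub>F k in sequentially. \<forall>s\<in>{0..t}.
      dist (reduced_drift (picard b k) s) (reduced_drift (picard_limit b) s) < e"
  proof (rule eventually_mono, intro ballI)
    fix k s assume close: "\<forall>s\<in>{0..t}. dist (picard b k s) (picard_limit b s) < e / (2 * L)"
      and s: "s \<in> {0..t}"
    have "\<bar>reduced_drift (picard b k) s - reduced_drift (picard_limit b) s\<bar> \<le> K * (1 + 2 * s) * (e / (2 * L))"
      using close s
      by (intro reduced_drift_lipschitz continuous_on_picard continuous_on_picard_limit)
        (auto simp: dist_real_def less_imp_le)
    also have "\<dots> \<le> L * (e / (2 * L))"
      unfolding L_def using s K_pos e L by (intro mult_right_mono mult_left_mono) auto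
    also have "\<dots> < e" using L e by simp
    finally show "dist (reduced_drift (picard b k) s) (reduced_drift (picard_limit b) s) < e"
      by (simp add: dist_real_def)
  qed
qed

lemma picard_limit_solves:
  assumes t: "t \<ge> 0"
  shows "(reduced_drift (picard_limit b) has_integral (picard_limit b t - x0 - b t)) {0..t}"
proof -
  obtain I J where I: "\<And>k. (reduced_drift (picard b k) has_integral I k) {0..t}"
    and J: "(reduced_drift (picard_limit b) has_integral J) {0..t}" and "I \<longlonglongrightarrow> J"
    using uniform_limit_integral[OF uniform_limit_reduced_drift_picard[OF t]
        continuous_on_reduced_drift[OF t continuous_on_picard] trivial_limit_sequentially] by blast
  then have "(\<lambda>k. picard b (Suc k) t) \<longlonglongrightarrow> x0 + b t + J"
    by (simp add: picard_step_def integral_unique[OF I] tendsto_add)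
  moreover have "(\<lambda>k. picard b (Suc k) t) \<longlonglongrightarrow> picard_limit b t"
    by (rule LIMSEQ_Suc[OF picard_tendsto[OF t]])
  ultimately have "x0 + b t + J = picard_limit b t" by (rule LIMSEQ_unique)
  then have "J = picard_limit b t - x0 - b t" by simp
  with J show ?thesis by simp
qed

end

section \<open>The solution in \<open>H\<close>\<close>

definition lift_coord :: "(nat \<Rightarrow> real) \<Rightarrow> (real \<Rightarrow> real) \<Rightarrow> (real \<Rightarrow> real) \<Rightarrow> real \<Rightarrow> nat \<Rightarrow> real" where
  "lift_coord c g X t n = c n + (if n = 0 then 0 else sqrt (a n) * integral {0..t} (\<lambda>r. g (real n * X r)))"

definition lift :: "(real \<Rightarrow> real) \<Rightarrow> real \<Rightarrow> Hpt" where
  "lift X t = (X t, lift_coord u0 cos X t, lift_coord v0 (\<lambda>z. - sin z) X t)"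

lemma lift_coord_diff_square_le:
  assumes "s \<ge> 0" "t \<ge> 0" and X: "continuous_on {0..max s t} X"
    and g: "continuous_on UNIV g" "\<And>z. \<bar>g z\<bar> \<le> 1"
  shows "(lift_coord c g X t n - lift_coord c g X s n)^2 \<le> real n ^ 4 * \<bar>a n\<bar> * (t - s)^2"
proof (cases "n = 0")
  case False
  have "continuous_on {0..max s t} (\<lambda>r. g (real n * X r))"
    by (rule continuous_on_compose2[OF g(1)]) (auto intro!: continuous_intros X)
  then have "\<bar>integral {0..t} (\<lambda>r. g (real n * X r)) - integral {0..s} (\<lambda>r. g (real n * X r))\<bar> \<le> \<bar>t - s\<bar>"
    using abs_integral_diff_le[of s t _ 1] assms g(2) by simp
  then have "(integral {0..t} (\<lambda>r. g (real n * X r)) - integral {0..s} (\<lambda>r. g (real n * X r)))^2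
      \<le> (t - s)^2"
    by (simp add: abs_le_square_iff)
  then have "\<bar>sqrt (a n)\<bar>^2 * (integral {0..t} (\<lambda>r. g (real n * X r))
      - integral {0..s} (\<lambda>r. g (real n * X r)))^2 \<le> \<bar>a n\<bar> * (t - s)^2"
    unfolding abs_sqrt_a_square by (intro mult_left_mono) auto
  then have "(lift_coord c g X t n - lift_coord c g X s n)^2 \<le> \<bar>a n\<bar> * (t - s)^2"
    unfolding lift_coord_def using False by (simp add: power_mult_distrib flip: right_diff_distrib)
  also have "\<dots> \<le> real n ^ 4 * \<bar>a n\<bar> * (t - s)^2"
  proof -
    have "1 \<le> real n ^ 4" using False by simp
    then have "\<bar>a n\<bar> \<le> real n ^ 4 * \<bar>a n\<bar>" by (simp add: mult_le_cancel_right1)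
    then show ?thesis by (intro mult_right_mono) auto
  qed
  finally show ?thesis .
qed (simp add: lift_coord_def)

lemma lift_coord_square_le:
  assumes "t \<in> {0..T}" and X: "continuous_on {0..t} X"
    and g: "continuous_on UNIV g" "\<And>z. \<bar>g z\<bar> \<le> 1"
  shows "(lift_coord c g X t n)^2 \<le> 2 * (c n)^2 + 2 * (real n ^ 4 * \<bar>a n\<bar> * T^2)"
proof -
  have "(lift_coord c g X t n - lift_coord c g X 0 n)^2 \<le> real n ^ 4 * \<bar>a n\<bar> * (t - 0)^2"
    by (rule lift_coord_diff_square_le[OF _ _ _ g]) (use assms in \<open>simp_all add: max_def\<close>)
  also have "\<dots> \<le> real n ^ 4 * \<bar>a n\<bar> * T^2"
    using assms by (intro mult_left_mono power_mono) auto
  moreover have "lift_coord c g X 0 n = c n" by (simp add: lift_coord_def)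
  ultimately have "(lift_coord c g X t n - c n)^2 \<le> real n ^ 4 * \<bar>a n\<bar> * T^2" by simp
  moreover have "(lift_coord c g X t n)^2 \<le> 2 * (c n)^2 + 2 * (lift_coord c g X t n - c n)^2"
    using zero_le_power2[of "lift_coord c g X t n - 2 * c n"] by (simp add: power2_eq_square algebra_simps)
  ultimately show ?thesis by simp
qed

lemma summable_coord_bound:
  "summable (\<lambda>n. c n ^ 2) \<Longrightarrow> summable (\<lambda>n. 2 * (c n)^2 + 2 * (real n ^ 4 * \<bar>a n\<bar> * T^2))"
  by (intro summable_add summable_mult summable_mult2 a_moment)

lemma summable_lift_coord_square:
  assumes "t \<ge> 0" and X: "continuous_on {0..t} X" and c: "summable (\<lambda>n. (c n)^2)"
    and g: "continuous_on UNIV g" "\<And>z. \<bar>g z\<bar> \<le> 1"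
  shows "summable (\<lambda>n. (lift_coord c g X t n)^2)"
  by (rule summable_comparison_test[OF _ summable_coord_bound[OF c, of t]])
     (use lift_coord_square_le[OF _ X g] assms(1) in auto)

lemma continuous_cos_neg_sin:
  "continuous_on UNIV (cos :: real \<Rightarrow> real)" "continuous_on UNIV (\<lambda>z::real. - sin z)"
  by (intro continuous_intros)+

lemma abs_neg_sin_le_one: "\<bar>- sin z\<bar> \<le> (1 :: real)"
  by simp

lemmas lift_cos = continuous_cos_neg_sin(1) abs_cos_le_one
lemmas lift_sin = continuous_cos_neg_sin(2) abs_neg_sin_le_one

lemma lift_inH: "t \<ge> 0 \<Longrightarrow> continuous_on {0..t} X \<Longrightarrow> inH (lift X t)"
  unfolding inH_def lift_def
  using summable_lift_coord_square[OF _ _ u0_square_summable lift_cos]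
    summable_lift_coord_square[OF _ _ v0_square_summable lift_sin] u0_zero v0_zero
  by (simp add: lift_coord_def)

definition coord_bound :: "real \<Rightarrow> real" where
  "coord_bound T = (\<Sum>n. 2 * (u0 n)^2 + 2 * (real n ^ 4 * \<bar>a n\<bar> * T^2))
    + (\<Sum>n. 2 * (v0 n)^2 + 2 * (real n ^ 4 * \<bar>a n\<bar> * T^2))"

lemma coord_bound_nonneg: "coord_bound T \<ge> 0"
  unfolding coord_bound_def
  by (intro add_nonneg_nonneg suminf_nonneg summable_coord_bound u0_square_summable v0_square_summable)
    auto

lemma Hnorm_lift_square_le:
  assumes t: "t \<in> {0..T}" and X: "continuous_on {0..t} X"
  shows "(Hnorm (lift X t))^2 \<le> (X t)^2 + coord_bound T"
proof -
  have t0: "t \<ge> 0" using t by simp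
  have "(\<Sum>n. (lift_coord c g X t n)^2) \<le> (\<Sum>n. 2 * (c n)^2 + 2 * (real n ^ 4 * \<bar>a n\<bar> * T^2))"
    "0 \<le> (\<Sum>n. (lift_coord c g X t n)^2)"
    if "summable (\<lambda>n. (c n)^2)" "continuous_on UNIV g" "\<And>z. \<bar>g z\<bar> \<le> 1" for c g
    using suminf_le[OF lift_coord_square_le[OF t X that(2,3)] summable_lift_coord_square[OF t0 X that]
        summable_coord_bound[OF that(1)]]
      suminf_nonneg[OF summable_lift_coord_square[OF t0 X that]] by auto
  from this[OF u0_square_summable lift_cos] this[OF v0_square_summable lift_sin]
  show ?thesis unfolding Hnorm_def lift_def coord_bound_def by simp
qed

lemma Hnorm_lift_diff_le:
  assumes X: "\<And>T. continuous_on {0..T} X" and "s \<ge> 0" "t \<ge> 0"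
  shows "Hnorm (Hdiff (lift X s) (lift X t))
    \<le> \<bar>X s - X t\<bar> + sqrt (2 * (\<Sum>n. real n ^ 4 * \<bar>a n\<bar>)) * \<bar>s - t\<bar>"
proof -
  define E where "E = (\<Sum>n. real n ^ 4 * \<bar>a n\<bar>)"
  have sum_le: "(\<Sum>n. (lift_coord c g X s n - lift_coord c g X t n)^2) \<le> E * (s - t)^2"
    "0 \<le> (\<Sum>n. (lift_coord c g X s n - lift_coord c g X t n)^2)"
    if "continuous_on UNIV g" "\<And>z. \<bar>g z\<bar> \<le> 1" for c g
  proof -
    have bound: "(lift_coord c g X s n - lift_coord c g X t n)^2 \<le> real n ^ 4 * \<bar>a n\<bar> * (s - t)^2" for n
      by (rule lift_coord_diff_square_le[OF assms(3,2) X that])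
    have majorant: "summable (\<lambda>n. real n ^ 4 * \<bar>a n\<bar> * (s - t)^2)" by (rule summable_mult2[OF a_moment])
    then have summable: "summable (\<lambda>n. (lift_coord c g X s n - lift_coord c g X t n)^2)"
      by (rule summable_comparison_test[rotated]) (use bound in auto)
    show "(\<Sum>n. (lift_coord c g X s n - lift_coord c g X t n)^2) \<le> E * (s - t)^2"
      using suminf_le[OF bound summable majorant] suminf_mult2[OF a_moment] unfolding E_def by simp
    show "0 \<le> (\<Sum>n. (lift_coord c g X s n - lift_coord c g X t n)^2)"
      by (rule suminf_nonneg[OF summable]) simp
  qed
  have "Hnorm (Hdiff (lift X s) (lift X t)) = sqrt ((X s - X t)^2
      + ((\<Sum>n. (lift_coord u0 cos X s n - lift_coord u0 cos X t n)^2)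
        + (\<Sum>n. (lift_coord v0 (\<lambda>z. - sin z) X s n - lift_coord v0 (\<lambda>z. - sin z) X t n)^2)))"
    unfolding Hnorm_def Hdiff_def lift_def by (simp add: add.assoc)
  also have "\<dots> \<le> \<bar>X s - X t\<bar> + sqrt (2 * E * (s - t)^2)"
    using sum_le[OF lift_cos, of u0] sum_le[OF lift_sin, of v0]
    by (intro order_trans[OF sqrt_square_add_le] add_left_mono real_sqrt_le_mono) auto
  finally show ?thesis unfolding E_def by (simp add: real_sqrt_mult)
qed

lemma lift_continuous:
  assumes X: "\<And>T. continuous_on {0..T} X" and t: "t \<ge> 0" and e: "e > 0"
  shows "\<exists>d>0. \<forall>s\<ge>0. \<bar>s - t\<bar> < d \<longrightarrow> Hnorm (Hdiff (lift X s) (lift X t)) < e"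
proof -
  define C where "C = sqrt (2 * (\<Sum>n. real n ^ 4 * \<bar>a n\<bar>))"
  define g where "g s = \<bar>X s - X t\<bar> + C * \<bar>s - t\<bar>" for s
  have "continuous_on {0..t+1} g" unfolding g_def by (intro continuous_intros X)
  moreover have "t \<in> {0..t+1}" using t by simp
  ultimately obtain d where "d > 0" and d: "\<forall>s\<in>{0..t+1}. dist s t < d \<longrightarrow> dist (g s) (g t) < e"
    using e unfolding continuous_on_iff by blast
  show ?thesis
  proof (intro exI[of _ "min d 1"] conjI allI impI)
    show "min d 1 > 0" using \<open>d > 0\<close> by simp
    fix s :: real assume "s \<ge> 0" "\<bar>s - t\<bar> < min d 1"
    then have "g s < e" using d by (auto simp: dist_real_def g_def)
    then show "Hnorm (Hdiff (lift X s) (lift X t)) < e"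
      using Hnorm_lift_diff_le[OF X \<open>s \<ge> 0\<close> t] unfolding g_def C_def by linarith
  qed
qed

lemma lift_bounded:
  assumes X: "continuous_on {0..T} X"
  shows "\<exists>C. \<forall>t\<in>{0..T}. Hnorm (lift X t) \<le> C"
proof -
  have "bounded (X ` {0..T})" by (intro compact_imp_bounded compact_continuous_image X compact_Icc)
  then obtain m where "\<forall>x\<in>X ` {0..T}. norm x \<le> m" unfolding bounded_iff by blast
  then have m: "(X t)^2 \<le> m^2" if "t \<in> {0..T}" for t
    using that abs_le_square_iff[of "X t" m] by force
  have "Hnorm (lift X t) \<le> sqrt (m^2 + coord_bound T)" if t: "t \<in> {0..T}" for t
    using Hnorm_lift_square_le[OF t continuous_on_subset[OF X]] m[OF t] t
    by (intro real_le_rsqrt) auto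
  then show ?thesis by blast
qed

lemma Fdrift_lift_term:
  assumes s: "s \<ge> 0" and X: "continuous_on {0..s} X"
  shows "real n * sqrt (a n) * (sin (real n * X s) * lift_coord u0 cos X s n
        + cos (real n * X s) * lift_coord v0 (\<lambda>z. - sin z) X s n)
    = real n * sqrt (a n) * (u0 n * sin (real n * X s) + v0 n * cos (real n * X s))
      + integral {0..s} (\<lambda>r. real n * a n * sin (real n * (X s - X r)))"
proof (cases "n = 0")
  case False
  then have abs_a: "\<bar>a n\<bar> = a n" using a_nonneg[of n] by simp
  define C where "C = integral {0..s} (\<lambda>r. cos (real n * X r))"
  define S where "S = integral {0..s} (\<lambda>r. - sin (real n * X r))"
  have "((\<lambda>r. cos (real n * X r)) has_integral C) {0..s}"
    "((\<lambda>r. - sin (real n * X r)) has_integral S) {0..s}"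
    unfolding C_def S_def has_integral_integral[symmetric]
    by (intro integrable_continuous_real continuous_intros X)+
  then have "((\<lambda>r. real n * a n * (sin (real n * X s) * cos (real n * X r)
        + cos (real n * X s) * (- sin (real n * X r))))
      has_integral real n * a n * (sin (real n * X s) * C + cos (real n * X s) * S)) {0..s}"
    by (intro has_integral_mult_right has_integral_add)
  then have "integral {0..s} (\<lambda>r. real n * a n * sin (real n * (X s - X r)))
      = real n * a n * (sin (real n * X s) * C + cos (real n * X s) * S)"
    by (simp add: integral_unique right_diff_distrib sin_diff)
  moreover have "lift_coord u0 cos X s n = u0 n + sqrt (a n) * C"
    "lift_coord v0 (\<lambda>z. - sin z) X s n = v0 n + sqrt (a n) * S"
    unfolding lift_coord_def C_def S_def using False by simp_all
  ultimately show ?thesis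
    by (simp add: algebra_simps) (simp add: mult.assoc[symmetric] abs_a)
qed simp

lemma fst_Fdrift_lift:
  assumes s: "s \<ge> 0" and X: "continuous_on {0..s} X"
  shows "fst (Fdrift a (lift X s)) = reduced_drift X s"
proof -
  define f where "f n r = real n * a n * sin (real n * (X s - X r))" for n r
  have f_cont: "continuous_on {0..s} (f n)" for n unfolding f_def by (intro continuous_intros X)
  have sum_cont: "continuous_on {0..s} (\<lambda>r. \<Sum>n<N. f n r)" for N
    by (intro continuous_on_sum f_cont)
  have partial_sums: "uniform_limit {0..s} (\<lambda>N r. \<Sum>n<N. f n r) (\<lambda>r. \<Sum>n. f n r) sequentially"
    by (rule Weierstrass_m_test[OF _ summable_psi_weight]) (simp add: f_def psi_term_bounds(1))
  obtain I J where I: "\<And>N. ((\<lambda>r. \<Sum>n<N. f n r) has_integral I N) {0..s}"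
    and J: "((\<lambda>r. \<Sum>n. f n r) has_integral J) {0..s}" and "I \<longlonglongrightarrow> J"
    using uniform_limit_integral[OF partial_sums sum_cont trivial_limit_sequentially] by blast
  moreover have "I = (\<lambda>N. \<Sum>n<N. integral {0..s} (f n))"
  proof
    fix N
    have "((\<lambda>r. \<Sum>n<N. f n r) has_integral (\<Sum>n<N. integral {0..s} (f n))) {0..s}"
      by (intro has_integral_sum finite_lessThan integrable_integral integrable_continuous_real f_cont)
    then show "I N = (\<Sum>n<N. integral {0..s} (f n))" using I[of N] by (rule has_integral_unique[symmetric])
  qed
  ultimately have memory_sums: "(\<lambda>n. integral {0..s} (f n)) sums memory X s"
    using integral_unique[OF J] unfolding sums_def memory_def psi_def f_def by simp
  have "fst (Fdrift a (lift X s)) = (\<Sum>n. real n * sqrt (a n) * (u0 n * sin (real n * X s)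
      + v0 n * cos (real n * X s)) + integral {0..s} (f n))"
    unfolding Fdrift_def lift_def f_def using Fdrift_lift_term[OF s X] by simp
  also have "\<dots> = phi (X s) + memory X s"
    using suminf_add[OF phi_series(1) sums_summable[OF memory_sums]] sums_unique[OF memory_sums]
    unfolding phi_def by simp
  finally show ?thesis unfolding reduced_drift_def .
qed

lemma has_integral_lift_coord:
  assumes X: "continuous_on {0..t} X" and g: "continuous_on UNIV g" and "t \<ge> 0"
  shows "((\<lambda>s. if n = 0 then 0 else sqrt (a n) * g (real n * X s))
    has_integral (lift_coord c g X t n - c n)) {0..t}"
proof -
  have "continuous_on {0..t} (\<lambda>s. g (real n * X s))"
    by (rule continuous_on_compose2[OF g]) (auto intro!: continuous_intros X)
  then have "((\<lambda>s. g (real n * X s)) has_integral integral {0..t} (\<lambda>s. g (real n * X s))) {0..t}"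
    by (rule integrable_integral[OF integrable_continuous_real])
  then show ?thesis unfolding lift_coord_def by (cases "n = 0") (auto intro: has_integral_mult_right)
qed

lemma lift_cong:
  assumes "\<And>r. r \<in> {0..t} \<Longrightarrow> X1 r = X2 r" "t \<ge> 0"
  shows "lift X1 t = lift X2 t"
proof -
  have "integral {0..t} (\<lambda>r. g (real n * X1 r)) = integral {0..t} (\<lambda>r. g (real n * X2 r))" for g n
    by (rule integral_cong) (simp add: assms(1))
  note integrals = this[of cos] this[of "\<lambda>z. - sin z"]
  show ?thesis using assms unfolding lift_def lift_coord_def integrals by simp
qed

lemma lift_picard_limit_solves:
  assumes b: "\<And>T. continuous_on {0..T} b"
  shows "is_solution a b (x0, u0, v0) (lift (picard_limit b))"
proof -
  note X = continuous_on_picard_limit[OF b]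
  have first: "((\<lambda>s. fst (Fdrift a (lift (picard_limit b) s)))
      has_integral fst (lift (picard_limit b) t) - x0 - b t) {0..t}" if t: "t \<ge> 0" for t
  proof -
    have "((\<lambda>s. fst (Fdrift a (lift (picard_limit b) s))) has_integral picard_limit b t - x0 - b t) {0..t}"
      by (rule has_integral_eq[OF _ picard_limit_solves[OF b t]]) (simp add: fst_Fdrift_lift X)
    then show ?thesis by (simp add: lift_def)
  qed
  have "((\<lambda>s. fst (snd (Fdrift a (lift (picard_limit b) s))) n)
      has_integral fst (snd (lift (picard_limit b) t)) n - u0 n) {0..t}"
    "((\<lambda>s. snd (snd (Fdrift a (lift (picard_limit b) s))) n)
      has_integral snd (snd (lift (picard_limit b) t)) n - v0 n) {0..t}" if "t \<ge> 0" for t n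
    using has_integral_lift_coord[OF X continuous_cos_neg_sin(1) that, of n u0]
      has_integral_lift_coord[OF X continuous_cos_neg_sin(2) that, of n v0]
    by (simp_all add: Fdrift_components lift_def if_distrib[of "\<lambda>x. x * _"] cong: if_cong)
  with first show ?thesis
    unfolding is_solution_def
    using lift_inH[OF _ X] lift_continuous[OF X] lift_bounded[OF X] by auto
qed

context
  fixes b Y assumes Y: "is_solution a b (x0, u0, v0) Y"
begin

lemma is_solutionD:
  "\<And>t. t \<ge> 0 \<Longrightarrow> inH (Y t)"
  "\<And>t e. t \<ge> 0 \<Longrightarrow> e > 0 \<Longrightarrow> \<exists>d>0. \<forall>s\<ge>0. \<bar>s - t\<bar> < d \<longrightarrow> Hnorm (Hdiff (Y s) (Y t)) < e"
  "\<And>t. t \<ge> 0 \<Longrightarrow> ((\<lambda>s. fst (Fdrift a (Y s))) has_integral (fst (Y t) - x0 - b t)) {0..t}"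
  "\<And>t n. t \<ge> 0 \<Longrightarrow>
    ((\<lambda>s. fst (snd (Fdrift a (Y s))) n) has_integral (fst (snd (Y t)) n - u0 n)) {0..t}"
  "\<And>t n. t \<ge> 0 \<Longrightarrow>
    ((\<lambda>s. snd (snd (Fdrift a (Y s))) n) has_integral (snd (snd (Y t)) n - v0 n)) {0..t}"
  using Y unfolding is_solution_def by simp_all

lemma continuous_on_fst_solution: "continuous_on {0..T} (\<lambda>t. fst (Y t))"
  unfolding continuous_on_iff
proof (intro ballI allI impI)
  fix t e :: real assume t: "t \<in> {0..T}" and e: "e > 0"
  then obtain d where "d > 0" and d: "\<And>s. s \<ge> 0 \<Longrightarrow> \<bar>s - t\<bar> < d \<Longrightarrow> Hnorm (Hdiff (Y s) (Y t)) < e"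
    using is_solutionD(2)[of t e] by auto
  have "\<bar>fst (Y s) - fst (Y t)\<bar> < e" if s: "s \<in> {0..T}" "dist s t < d" for s
    using abs_fst_diff_le_Hnorm[OF is_solutionD(1) is_solutionD(1), of s t] d[of s] t s
    by (simp add: dist_real_def)
  with \<open>d > 0\<close> show "\<exists>d>0. \<forall>s\<in>{0..T}. dist s t < d \<longrightarrow> dist (fst (Y s)) (fst (Y t)) < e"
    by (auto simp: dist_real_def)
qed

lemma solution_eq_lift:
  assumes t: "t \<ge> 0"
  shows "Y t = lift (\<lambda>t. fst (Y t)) t"
proof -
  note X = continuous_on_fst_solution
  have coord: "f (Y t) = lift_coord c g (\<lambda>t. fst (Y t)) t"
    if "continuous_on UNIV g" and
      eq: "\<And>n. ((\<lambda>s. if n = 0 then 0 else sqrt (a n) * g (real n * fst (Y s))) has_integral f (Y t) n - c n) {0..t}"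
    for f :: "Hpt \<Rightarrow> nat \<Rightarrow> real" and c g
  proof
    fix n show "f (Y t) n = lift_coord c g (\<lambda>t. fst (Y t)) t n"
      using has_integral_unique[OF eq[of n] has_integral_lift_coord[OF X that(1) t, of n c]] by simp
  qed
  have "fst (snd (Y t)) = lift_coord u0 cos (\<lambda>t. fst (Y t)) t"
    using is_solutionD(4)[OF t] by (intro coord[OF continuous_cos_neg_sin(1)]) (simp add: Fdrift_components)
  moreover have "snd (snd (Y t)) = lift_coord v0 (\<lambda>z. - sin z) (\<lambda>t. fst (Y t)) t"
  proof (rule coord[OF continuous_cos_neg_sin(2)])
    fix n show "((\<lambda>s. if n = 0 then 0 else sqrt (a n) * - sin (real n * fst (Y s)))
        has_integral snd (snd (Y t)) n - v0 n) {0..t}"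
      by (rule has_integral_eq[OF _ is_solutionD(5)[OF t, of n]]) (simp add: Fdrift_components)
  qed
  ultimately show ?thesis unfolding lift_def by (simp add: prod_eq_iff)
qed

lemma solution_solves_reduced_equation:
  assumes t: "t \<ge> 0"
  shows "(reduced_drift (\<lambda>t. fst (Y t)) has_integral (fst (Y t) - x0 - b t)) {0..t}"
  using is_solutionD(3)[OF t]
proof (rule has_integral_eq[rotated])
  fix s assume s: "s \<in> {0..t}"
  then have "Y s = lift (\<lambda>t. fst (Y t)) s" by (intro solution_eq_lift) simp
  then show "fst (Fdrift a (Y s)) = reduced_drift (\<lambda>t. fst (Y t)) s"
    using fst_Fdrift_lift[OF _ continuous_on_fst_solution] s by simp
qed

end

lemma solution_unique:
  assumes Y1: "is_solution a b (x0, u0, v0) Y1" and Y2: "is_solution a b (x0, u0, v0) Y2"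
    and t: "t \<ge> 0"
  shows "Y1 t = Y2 t"
proof -
  have "fst (Y1 r) = fst (Y2 r)" if "r \<ge> 0" for r
    using reduced_equation_unique[OF continuous_on_fst_solution[OF Y1] continuous_on_fst_solution[OF Y2]
        solution_solves_reduced_equation[OF Y1, unfolded diff_diff_eq]
        solution_solves_reduced_equation[OF Y2, unfolded diff_diff_eq] that] .
  then have "lift (\<lambda>t. fst (Y1 t)) t = lift (\<lambda>t. fst (Y2 t)) t"
    using t by (intro lift_cong) auto
  then show ?thesis using solution_eq_lift[OF Y1 t] solution_eq_lift[OF Y2 t] by simp
qed

section \<open>Adaptedness and the moment bound\<close>

context
  fixes N :: "'w measure" and X :: "'w \<Rightarrow> real \<Rightarrow> real" and t :: real
  assumes t: "t \<ge> 0"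
    and X_measurable: "\<And>r. r \<in> {0..t} \<Longrightarrow> (\<lambda>\<omega>. X \<omega> r) \<in> borel_measurable N"
    and X_continuous: "\<And>\<omega>. \<omega> \<in> space N \<Longrightarrow> continuous_on {0..t} (X \<omega>)"
begin

lemma borel_measurable_reduced_drift:
  assumes s: "s \<in> {0..t}"
  shows "(\<lambda>\<omega>. reduced_drift (X \<omega>) s) \<in> borel_measurable N"
proof -
  have "(\<lambda>\<omega>. psi (X \<omega> s - X \<omega> r)) \<in> borel_measurable N" if "r \<in> {0..s}" for r
    using that s
    by (intro measurable_compose[OF _ borel_measurable_continuous_onI[OF continuous_on_psi]]
        borel_measurable_diff X_measurable) auto
  moreover have "continuous_on {0..s} (\<lambda>r. psi (X \<omega> s - X \<omega> r))" if "\<omega> \<in> space N" for \<omega>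
    using that s by (intro continuous_on_psi_diff continuous_on_subset[OF X_continuous]) auto
  ultimately have "(\<lambda>\<omega>. memory (X \<omega>) s) \<in> borel_measurable N"
    unfolding memory_def using s by (intro borel_measurable_integral_continuous_path) auto
  moreover have "(\<lambda>\<omega>. phi (X \<omega> s)) \<in> borel_measurable N"
    by (intro measurable_compose[OF X_measurable[OF s] borel_measurable_continuous_onI[OF continuous_on_phi]])
  ultimately show ?thesis unfolding reduced_drift_def by (rule borel_measurable_add[rotated])
qed

lemma borel_measurable_integral_reduced_drift:
  "(\<lambda>\<omega>. integral {0..t} (reduced_drift (X \<omega>))) \<in> borel_measurable N"
  using borel_measurable_reduced_drift continuous_on_reduced_drift[OF t X_continuous]
  by (intro borel_measurable_integral_continuous_path[OF t]) auto

end

context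
  fixes N :: "'w measure" and B :: "real \<Rightarrow> 'w \<Rightarrow> real" and t :: real
  assumes t: "t \<ge> 0"
    and B_measurable: "\<And>s. s \<in> {0..t} \<Longrightarrow> B s \<in> borel_measurable N"
    and B_continuous: "\<And>\<omega> T. \<omega> \<in> space N \<Longrightarrow> continuous_on {0..T} (\<lambda>s. B s \<omega>)"
begin

lemma borel_measurable_picard:
  "s \<in> {0..t} \<Longrightarrow> (\<lambda>\<omega>. picard (\<lambda>s. B s \<omega>) k s) \<in> borel_measurable N"
proof (induction k arbitrary: s)
  case 0 then show ?case by (simp, intro borel_measurable_add borel_measurable_const B_measurable)
next
  case (Suc k)
  have "s \<ge> 0" using Suc.prems by simp
  then have "(\<lambda>\<omega>. integral {0..s} (reduced_drift (picard (\<lambda>s. B s \<omega>) k))) \<in> borel_measurable N"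
    using Suc by (intro borel_measurable_integral_reduced_drift continuous_on_picard B_continuous) auto
  then show ?case using Suc.prems unfolding picard.simps picard_step_def
    by (intro borel_measurable_add borel_measurable_const B_measurable)
qed

lemma borel_measurable_picard_limit:
  "s \<in> {0..t} \<Longrightarrow> (\<lambda>\<omega>. picard_limit (\<lambda>s. B s \<omega>) s) \<in> borel_measurable N"
  by (rule borel_measurable_LIMSEQ_real[OF picard_tendsto borel_measurable_picard])
    (auto intro: B_continuous)

lemma borel_measurable_lift_coord:
  assumes g: "continuous_on UNIV g"
  shows "(\<lambda>\<omega>. lift_coord c g (picard_limit (\<lambda>s. B s \<omega>)) t n) \<in> borel_measurable N"
proof -
  have "(\<lambda>\<omega>. integral {0..t} (\<lambda>r. g (real n * picard_limit (\<lambda>s. B s \<omega>) r))) \<in> borel_measurable N"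
  proof (rule borel_measurable_integral_continuous_path[OF t])
    fix r assume "r \<in> {0..t}"
    then show "(\<lambda>\<omega>. g (real n * picard_limit (\<lambda>s. B s \<omega>) r)) \<in> borel_measurable N"
      by (intro measurable_compose[OF _ borel_measurable_continuous_onI[OF g]]
          borel_measurable_times borel_measurable_const borel_measurable_picard_limit)
  next
    fix \<omega> assume "\<omega> \<in> space N"
    then show "continuous_on {0..t} (\<lambda>r. g (real n * picard_limit (\<lambda>s. B s \<omega>) r))"
      by (intro continuous_on_compose2[OF g] continuous_intros continuous_on_picard_limit B_continuous)
        auto
  qed
  then show ?thesis unfolding lift_coord_def by (cases "n = 0") simp_all
qed

end

lemma lift_picard_limit_adapted:
  assumes "std_BM M B"
  shows "H_adapted M B (\<lambda>t \<omega>. lift (picard_limit (\<lambda>s. B s \<omega>)) t)"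
  unfolding H_adapted_def
proof (intro allI impI conjI)
  fix t :: real assume t: "t \<ge> 0"
  have B_continuous: "continuous_on {0..T} (\<lambda>s. B s \<omega>)" if "\<omega> \<in> space (BM_filt M B t)" for \<omega> T
    using std_BM_D(4)[OF assms, of \<omega>] that by (auto simp: space_BM_filt intro: continuous_on_subset)
  show "(\<lambda>\<omega>. fst (lift (picard_limit (\<lambda>s. B s \<omega>)) t)) \<in> borel_measurable (BM_filt M B t)"
    unfolding lift_def fst_conv
    by (rule borel_measurable_picard_limit[OF t]) (use t in \<open>auto intro: B_continuous measurable_BM_filt\<close>)
  fix n
  show "(\<lambda>\<omega>. fst (snd (lift (picard_limit (\<lambda>s. B s \<omega>)) t)) n) \<in> borel_measurable (BM_filt M B t)"
    "(\<lambda>\<omega>. snd (snd (lift (picard_limit (\<lambda>s. B s \<omega>)) t)) n) \<in> borel_measurable (BM_filt M B t)"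
    unfolding lift_def fst_conv snd_conv
    by (rule borel_measurable_lift_coord[OF t], (auto intro: B_continuous measurable_BM_filt)[2],
        rule continuous_cos_neg_sin)+
qed

lemma Hnorm_lift_picard_limit_square_le:
  assumes b: "\<And>T. continuous_on {0..T} b" and t: "t \<in> {0..T}"
  shows "(Hnorm (lift (picard_limit b) t))^2 \<le> 2 * (\<bar>x0\<bar> + K * (1 + T) * T)^2 + coord_bound T + 2 * (b t)^2"
proof -
  define A where "A = \<bar>x0\<bar> + K * (1 + T) * T"
  note X = continuous_on_picard_limit[OF b]
  have "norm (integral {0..t} (reduced_drift (picard_limit b))) \<le> K * (1 + T) * (t - 0)"
  proof (rule integral_bound)
    fix s assume s: "s \<in> {0..t}"
    have "\<bar>reduced_drift (picard_limit b) s\<bar> \<le> K * (1 + s)"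
      using s by (intro abs_reduced_drift_le X) simp
    also have "\<dots> \<le> K * (1 + T)" using s t K_pos by (intro mult_left_mono) auto
    finally show "norm (reduced_drift (picard_limit b) s) \<le> K * (1 + T)" by simp
  qed (use t X in \<open>auto intro: continuous_on_reduced_drift\<close>)
  also have "\<dots> \<le> K * (1 + T) * T" using t K_pos by (intro mult_left_mono) auto
  finally have "\<bar>picard_limit b t\<bar> \<le> A + \<bar>b t\<bar>"
    using integral_unique[OF picard_limit_solves[OF b, of t]] t unfolding A_def by auto
  then have "(picard_limit b t)^2 \<le> (A + \<bar>b t\<bar>)^2"
    by (metis abs_ge_zero abs_le_square_iff abs_of_nonneg add_nonneg_nonneg A_def K_pos
        order_trans power2_abs)
  also have "\<dots> \<le> 2 * A^2 + 2 * (b t)^2"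
    using zero_le_power2[of "A - \<bar>b t\<bar>"] by (simp add: power2_eq_square algebra_simps)
  finally show ?thesis
    using Hnorm_lift_square_le[OF t X] unfolding A_def by linarith
qed

lemma nn_integral_sup_Hnorm_lift_finite:
  assumes BM: "std_BM M B"
  shows "(\<integral>\<^sup>+\<omega>. (SUP t\<in>{0..T}. ennreal ((Hnorm (lift (picard_limit (\<lambda>s. B s \<omega>)) t))^2)) \<partial>M) < \<infinity>"
proof (cases "T \<ge> 0")
  case True
  interpret prob_space M by (rule std_BM_D(1)[OF BM])
  obtain Z where Z: "Z \<in> borel_measurable M" "integral\<^sup>N M Z < \<infinity>"
    and B_le_Z: "\<And>\<omega> t. \<omega> \<in> space M \<Longrightarrow> t \<in> {0..T} \<Longrightarrow> ennreal ((B t \<omega>)^2) \<le> Z \<omega>"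
    using BM_sup_square_majorant[OF BM True] by blast
  define C where "C = 2 * (\<bar>x0\<bar> + K * (1 + T) * T)^2 + coord_bound T"
  have "C \<ge> 0" unfolding C_def using coord_bound_nonneg by simp
  have "(\<integral>\<^sup>+\<omega>. (SUP t\<in>{0..T}. ennreal ((Hnorm (lift (picard_limit (\<lambda>s. B s \<omega>)) t))^2)) \<partial>M)
      \<le> (\<integral>\<^sup>+\<omega>. ennreal C + 2 * Z \<omega> \<partial>M)"
  proof (intro nn_integral_mono SUP_least)
    fix \<omega> t assume \<omega>: "\<omega> \<in> space M" and t: "t \<in> {0..T}"
    have "continuous_on {0..T'} (\<lambda>s. B s \<omega>)" for T'
      using std_BM_D(4)[OF BM \<omega>] by (rule continuous_on_subset) auto
    then have "ennreal ((Hnorm (lift (picard_limit (\<lambda>s. B s \<omega>)) t))^2) \<le> ennreal (C + 2 * (B t \<omega>)^2)"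
      using Hnorm_lift_picard_limit_square_le[OF _ t] unfolding C_def by (intro ennreal_leI) auto
    also have "\<dots> = ennreal C + 2 * ennreal ((B t \<omega>)^2)"
      using \<open>C \<ge> 0\<close> by (simp add: ennreal_plus ennreal_mult)
    also have "\<dots> \<le> ennreal C + 2 * Z \<omega>"
      by (intro add_left_mono mult_left_mono B_le_Z \<omega> t) simp
    finally show "ennreal ((Hnorm (lift (picard_limit (\<lambda>s. B s \<omega>)) t))^2) \<le> ennreal C + 2 * Z \<omega>" .
  qed
  also have "\<dots> = ennreal C + 2 * integral\<^sup>N M Z"
    using Z by (simp add: nn_integral_add nn_integral_cmult emeasure_space_1)
  also have "\<dots> < \<infinity>" using Z by (simp add: ennreal_mult_less_top)
  finally show ?thesis .
qed (simp add: bot_ennreal)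

end

theorem proposition1:
  fixes a :: "nat \<Rightarrow> real" and M :: "'w measure" and B :: "real \<Rightarrow> 'w \<Rightarrow> real" and y :: Hpt
  assumes "\<forall>n\<ge>1. a n > 0"
    and "summable (\<lambda>n. (1 + (real n)^2)^5 * (a n)^2)"
    and "std_BM M B"
    and "inH y"
  shows "\<exists>Y :: real \<Rightarrow> 'w \<Rightarrow> Hpt.
           H_adapted M B Y
         \<and> (AE \<omega> in M. is_solution a (\<lambda>t. B t \<omega>) y (\<lambda>t. Y t \<omega>))
         \<and> (\<forall>Z :: real \<Rightarrow> 'w \<Rightarrow> Hpt.
               (AE \<omega> in M. is_solution a (\<lambda>t. B t \<omega>) y (\<lambda>t. Z t \<omega>))
               \<longrightarrow> (AE \<omega> in M. \<forall>t\<ge>0. Z t \<omega> = Y t \<omega>))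
         \<and> (\<forall>T::real. (\<integral>\<^sup>+\<omega>. (SUP t\<in>{0..T}. ennreal ((Hnorm (Y t \<omega>))^2)) \<partial>M) < \<infinity>)"
proof -
  obtain x0 u0 v0 where y: "y = (x0, u0, v0)" by (cases y)
  interpret coupled_system a x0 u0 v0
    using assms(1,4) summable_power4_if_weighted_square_summable[OF assms(2)]
    by unfold_locales (auto simp: y inH_def less_imp_le)
  define Y where "Y t \<omega> = lift (picard_limit (\<lambda>s. B s \<omega>)) t" for t \<omega>
  have solution: "is_solution a (\<lambda>t. B t \<omega>) y (\<lambda>t. Y t \<omega>)" if "\<omega> \<in> space M" for \<omega>
    using std_BM_D(4)[OF assms(3) that] unfolding Y_def y
    by (intro lift_picard_limit_solves) (auto intro: continuous_on_subset)
  then have AE_solution: "AE \<omega> in M. is_solution a (\<lambda>t. B t \<omega>) y (\<lambda>t. Y t \<omega>)" by (rule AE_I2)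
  show ?thesis
  proof (intro exI[of _ Y] conjI allI impI)
    show "H_adapted M B Y" unfolding Y_def by (rule lift_picard_limit_adapted[OF assms(3)])
    show "AE \<omega> in M. is_solution a (\<lambda>t. B t \<omega>) y (\<lambda>t. Y t \<omega>)" by (rule AE_solution)
    fix Z :: "real \<Rightarrow> 'w \<Rightarrow> Hpt"
    assume "AE \<omega> in M. is_solution a (\<lambda>t. B t \<omega>) y (\<lambda>t. Z t \<omega>)"
    with AE_solution show "AE \<omega> in M. \<forall>t\<ge>0. Z t \<omega> = Y t \<omega>"
      by eventually_elim (auto simp: y intro: solution_unique)
  next
    show "(\<integral>\<^sup>+\<omega>. (SUP t\<in>{0..T}. ennreal ((Hnorm (Y t \<omega>))^2)) \<partial>M) < \<infinity>" for T
      unfolding Y_def by (rule nn_integral_sup_Hnorm_lift_finite[OF assms(3)])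
  qed
qed

end
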